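(* Let $(M,g)$ be a Riemannian manifold of dimension $2n+1$ with scalar curvature $r$ and Ricci tensor $\mathrm{Ric}$, and suppose $(M,g)$ is a closed $(m,\rho)$-quasi-Einstein manifold with potential vector field $V$ and constants $\lambda,\rho\in\mathbb{R}$, $m>0$. Then for every vector field $X$ on $M$, \[ \frac{m-1}{m}\,\mathrm{Ric}(V,X) = \frac{2n\lambda+r(2n\rho -1)}{m}\,V^{\flat}(X) -\frac{4n\rho-1}{2}\,X(r). \]
   Context: A Riemannian manifold $(M,g)$ is an $(m,\rho)$-quasi-Einstein manifold if there exist a vector field $V$ (the potential vector field) and real constants $\lambda,\rho$ and a positive real $m$ such that $\frac12\mathcal{L}_V g+\mathrm{Ric}-\frac1m V^{\flat}\otimes V^{\flat}=(\lambda+\rho r)g$, where $\mathcal{L}_V$ is the Lie derivative, $r$ the scalar curvature and $V^\flat=g(V,\cdot)$ the 1-form metrically dual to $V$. It is called closed if $dV^{\flat}=0$. *)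

theory Defs
  imports "HOL-Analysis.Analysis"
begin

text \<open>Local (coordinate) Riemannian geometry on an open set U of real^'d.
  Index type 'd enumerates the coordinates; the dimension is CARD('d).\<close>

definition partial :: "'d::finite \<Rightarrow> (real^'d \<Rightarrow> real) \<Rightarrow> real^'d \<Rightarrow> real" where
  "partial i f x = frechet_derivative f (at x) (axis i 1)"

fun dpart :: "'d::finite list \<Rightarrow> (real^'d \<Rightarrow> real) \<Rightarrow> real^'d \<Rightarrow> real" where
  "dpart [] f = f"
| "dpart (i # is) f = partial i (dpart is f)"

definition smooth_on :: "(real^'d::finite) set \<Rightarrow> (real^'d \<Rightarrow> real) \<Rightarrow> bool" where
  "smooth_on U f \<longleftrightarrow> (\<forall>is. \<forall>x\<in>U. dpart is f differentiable (at x))"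

definition riemannian_metric :: "(real^'d::finite) set \<Rightarrow> ('d \<Rightarrow> 'd \<Rightarrow> real^'d \<Rightarrow> real) \<Rightarrow> bool" where
  "riemannian_metric U g \<longleftrightarrow> open U \<and> (\<forall>i j. smooth_on U (g i j))
     \<and> (\<forall>i j x. g i j x = g j i x)
     \<and> (\<forall>x\<in>U. \<forall>v::real^'d. v \<noteq> 0 \<longrightarrow> (\<Sum>i\<in>UNIV. \<Sum>j\<in>UNIV. v$i * g i j x * v$j) > 0)"

definition ginv :: "('d::finite \<Rightarrow> 'd \<Rightarrow> real^'d \<Rightarrow> real) \<Rightarrow> 'd \<Rightarrow> 'd \<Rightarrow> real^'d \<Rightarrow> real" where
  "ginv g i j x = matrix_inv ((\<chi> a b. g a b x) :: real^'d^'d) $ i $ j"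

definition christoffel :: "('d::finite \<Rightarrow> 'd \<Rightarrow> real^'d \<Rightarrow> real) \<Rightarrow> 'd \<Rightarrow> 'd \<Rightarrow> 'd \<Rightarrow> real^'d \<Rightarrow> real" where
  "christoffel g k i j x = (1/2) * (\<Sum>l\<in>UNIV. ginv g k l x *
      (partial i (g j l) x + partial j (g i l) x - partial l (g i j) x))"

definition ricci :: "('d::finite \<Rightarrow> 'd \<Rightarrow> real^'d \<Rightarrow> real) \<Rightarrow> 'd \<Rightarrow> 'd \<Rightarrow> real^'d \<Rightarrow> real" where
  "ricci g j k x = (\<Sum>i\<in>UNIV. partial i (christoffel g i j k) x - partial j (christoffel g i i k) x
      + (\<Sum>p\<in>UNIV. christoffel g i i p x * christoffel g p j k x
             - christoffel g i j p x * christoffel g p i k x))"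

definition scalar_curv :: "('d::finite \<Rightarrow> 'd \<Rightarrow> real^'d \<Rightarrow> real) \<Rightarrow> real^'d \<Rightarrow> real" where
  "scalar_curv g x = (\<Sum>j\<in>UNIV. \<Sum>k\<in>UNIV. ginv g j k x * ricci g j k x)"

definition flat :: "('d::finite \<Rightarrow> 'd \<Rightarrow> real^'d \<Rightarrow> real) \<Rightarrow> ('d \<Rightarrow> real^'d \<Rightarrow> real) \<Rightarrow> 'd \<Rightarrow> real^'d \<Rightarrow> real" where
  "flat g V i x = (\<Sum>k\<in>UNIV. g i k x * V k x)"

definition lie_metric :: "('d::finite \<Rightarrow> 'd \<Rightarrow> real^'d \<Rightarrow> real) \<Rightarrow> ('d \<Rightarrow> real^'d \<Rightarrow> real) \<Rightarrow> 'd \<Rightarrow> 'd \<Rightarrow> real^'d \<Rightarrow> real" where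
  "lie_metric g V i j x = (\<Sum>k\<in>UNIV. V k x * partial k (g i j) x
      + g k j x * partial i (V k) x + g i k x * partial j (V k) x)"

definition quasi_einstein ::
  "(real^'d::finite) set \<Rightarrow> ('d \<Rightarrow> 'd \<Rightarrow> real^'d \<Rightarrow> real) \<Rightarrow> ('d \<Rightarrow> real^'d \<Rightarrow> real)
     \<Rightarrow> real \<Rightarrow> real \<Rightarrow> real \<Rightarrow> bool" where
  "quasi_einstein U g V m lam rho \<longleftrightarrow> riemannian_metric U g \<and> (\<forall>k. smooth_on U (V k)) \<and> m > 0
     \<and> (\<forall>x\<in>U. \<forall>i j. (1/2) * lie_metric g V i j x + ricci g i j x - (1/m) * flat g V i x * flat g V j x
                   = (lam + rho * scalar_curv g x) * g i j x)"

definition closed_qe ::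
  "(real^'d::finite) set \<Rightarrow> ('d \<Rightarrow> 'd \<Rightarrow> real^'d \<Rightarrow> real) \<Rightarrow> ('d \<Rightarrow> real^'d \<Rightarrow> real)
     \<Rightarrow> real \<Rightarrow> real \<Rightarrow> real \<Rightarrow> bool" where
  "closed_qe U g V m lam rho \<longleftrightarrow> quasi_einstein U g V m lam rho
     \<and> (\<forall>x\<in>U. \<forall>i j. partial i (flat g V j) x = partial j (flat g V i) x)"

end

theory Submission
  imports Defs
begin

text \<open>Since \<open>V\<^sup>\<flat>\<close> is closed, \<open>\<onehalf>\<L>\<^sub>Vg = \<nabla>V\<^sup>\<flat>\<close>, so the quasi-Einstein equation says that
  \<open>E = \<nabla>V\<^sup>\<flat> + Ric - (1/m) V\<^sup>\<flat>\<otimes>V\<^sup>\<flat> - (\<lambda> + \<rho> r) g\<close> vanishes. Four scalar consequences are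
  obtained by contracting \<open>E\<close> with \<open>V\<close> and with \<open>g\<close>, and by contracting \<open>\<nabla>E\<close> in the two ways that
  give the divergence and the gradient of the trace. Two classical identities relate the remaining
  unknowns: commuting covariant derivatives of the closed form \<open>V\<^sup>\<flat>\<close> shows that the divergence of
  \<open>\<nabla>V\<^sup>\<flat>\<close> exceeds the gradient of its trace by \<open>Ric(V)\<close> (Ricci identity), and the twice
  contracted second Bianchi identity gives \<open>2 div Ric = dr\<close>. Eliminating the divergence and trace
  of \<open>\<nabla>V\<^sup>\<flat>\<close>, \<open>div Ric\<close>, \<open>\<nabla>\<^sub>VV\<^sup>\<flat>\<close> and \<open>|V|\<^sup>2\<close> from these six relations, in dimension \<open>2n + 1\<close>,
  leaves the formula for \<open>Ric(V, \<cdot>)\<close>.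

  Everything is computed in a chart, so the argument also needs Schwarz's theorem on mixed
  partials and the smoothness of the inverse metric.\<close>

section \<open>Calculus of coordinate partial derivatives\<close>

lemma partial_eq_has_derivative:
  assumes "(f has_derivative f') (at x)"
  shows "partial i f x = f' (axis i 1)"
  unfolding partial_def using frechet_derivative_at[OF assms] by simp

lemma has_derivative_frechet_derivative:
  "f differentiable (at x) \<Longrightarrow> (f has_derivative frechet_derivative f (at x)) (at x)"
  using frechet_derivative_works by blast

lemma partial_const: "partial i (\<lambda>y. c) x = 0"
  by (simp add: partial_eq_has_derivative[OF has_derivative_const])

lemma partial_add:
  assumes "f differentiable (at x)" "g differentiable (at x)"
  shows "partial i (\<lambda>y. f y + g y) x = partial i f x + partial i g x"
  using partial_eq_has_derivative[OF has_derivative_add[OF assms[THEN has_derivative_frechet_derivative]]]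
  by (simp add: partial_def)

lemma partial_diff:
  assumes "f differentiable (at x)" "g differentiable (at x)"
  shows "partial i (\<lambda>y. f y - g y) x = partial i f x - partial i g x"
  using partial_eq_has_derivative[OF has_derivative_diff[OF assms[THEN has_derivative_frechet_derivative]]]
  by (simp add: partial_def)

lemma partial_mult:
  assumes "f differentiable (at x)" "g differentiable (at x)"
  shows "partial i (\<lambda>y. f y * g y) x = f x * partial i g x + partial i f x * g x"
  using partial_eq_has_derivative[OF has_derivative_mult[OF assms[THEN has_derivative_frechet_derivative]]]
  by (simp add: partial_def)

lemma partial_cmult:
  assumes "f differentiable (at x)"
  shows "partial i (\<lambda>y. c * f y) x = c * partial i f x"
  using partial_mult[OF differentiable_const assms, of i c] by (simp add: partial_const)

lemma partial_sum:
  assumes "finite A" "\<And>k. k \<in> A \<Longrightarrow> F k differentiable (at x)"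
  shows "partial i (\<lambda>y. \<Sum>k\<in>A. F k y) x = (\<Sum>k\<in>A. partial i (F k) x)"
proof -
  have "((\<lambda>y. \<Sum>k\<in>A. F k y) has_derivative (\<lambda>h. \<Sum>k\<in>A. frechet_derivative (F k) (at x) h)) (at x)"
    using assms by (intro has_derivative_sum has_derivative_frechet_derivative) auto
  then show ?thesis
    using partial_eq_has_derivative by (simp add: partial_def)
qed

lemma partial_inverse:
  assumes "f differentiable (at x)" "f x \<noteq> 0"
  shows "partial i (\<lambda>y. inverse (f y)) x = - (inverse (f x) * partial i f x * inverse (f x))"
  using partial_eq_has_derivative[OF Deriv.has_derivative_inverse[OF assms(2)
      has_derivative_frechet_derivative[OF assms(1)]]]
  by (simp add: partial_def)

lemma partial_cong_open:
  assumes "open U" "x \<in> U" "\<And>y. y \<in> U \<Longrightarrow> f y = g y"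
  shows "partial i f x = partial i g x"
proof -
  have "(f has_derivative f') (at x) \<longleftrightarrow> (g has_derivative f') (at x)" for f'
    using assms has_derivative_transform_within_open by metis
  then show ?thesis by (simp add: partial_def frechet_derivative_def)
qed

lemma differentiable_cong_open:
  assumes "open U" "x \<in> U" "\<And>y. y \<in> U \<Longrightarrow> f y = g y" "f differentiable (at x)"
  shows "g differentiable (at x)"
  using assms has_derivative_transform_within_open unfolding differentiable_def by metis

lemma has_derivative_partial_along_axis:
  assumes "f differentiable (at (y + t *\<^sub>R axis i 1))"
  shows "((\<lambda>s. f (y + s *\<^sub>R axis i 1)) has_derivative
           (\<lambda>h. h * partial i f (y + t *\<^sub>R axis i 1))) (at t)"
proof -
  let ?D = "frechet_derivative f (at (y + t *\<^sub>R axis i 1))"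
  have "((\<lambda>s. y + s *\<^sub>R axis i 1) has_derivative (\<lambda>h. h *\<^sub>R axis i 1)) (at t)"
    by (auto intro!: derivative_eq_intros)
  from has_derivative_compose[OF this has_derivative_frechet_derivative[OF assms]]
  have "((\<lambda>s. f (y + s *\<^sub>R axis i 1)) has_derivative (\<lambda>h. ?D (h *\<^sub>R axis i 1))) (at t)" .
  moreover have "linear ?D"
    using has_derivative_frechet_derivative[OF assms] has_derivative_linear by blast
  ultimately show ?thesis by (simp add: partial_def linear_scale)
qed

section \<open>Smooth functions\<close>

lemma dpart_snoc: "dpart (is @ [i]) f = dpart is (partial i f)"
  by (induction "is") auto

lemma smooth_on_iff_partial:
  "smooth_on U f \<longleftrightarrow> (\<forall>x\<in>U. f differentiable (at x)) \<and> (\<forall>i. smooth_on U (partial i f))"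
proof
  assume "smooth_on U f"
  then show "(\<forall>x\<in>U. f differentiable (at x)) \<and> (\<forall>i. smooth_on U (partial i f))"
    unfolding smooth_on_def by (metis dpart.simps(1) dpart_snoc)
next
  assume *: "(\<forall>x\<in>U. f differentiable (at x)) \<and> (\<forall>i. smooth_on U (partial i f))"
  show "smooth_on U f" unfolding smooth_on_def
  proof (intro allI ballI)
    fix "is" x assume "x \<in> U"
    then show "dpart is f differentiable (at x)"
      using * unfolding smooth_on_def by (cases "is" rule: rev_cases) (simp_all add: dpart_snoc)
  qed
qed

lemma smooth_on_imp_differentiable: "smooth_on U f \<Longrightarrow> x \<in> U \<Longrightarrow> f differentiable (at x)"
  using smooth_on_iff_partial by blast

lemma smooth_on_partial: "smooth_on U f \<Longrightarrow> smooth_on U (partial i f)"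
  using smooth_on_iff_partial by blast

text \<open>The closure properties of \<open>smooth_on\<close> are proved all at once: the partial derivatives of a
  function generated from smooth ones by the field operations are again of this kind.\<close>

inductive_set smooth_generated :: "(real^'d::finite) set \<Rightarrow> (real^'d \<Rightarrow> real) set" for U where
  smooth: "smooth_on U f \<Longrightarrow> f \<in> smooth_generated U"
| const: "(\<lambda>x. c) \<in> smooth_generated U"
| add: "f \<in> smooth_generated U \<Longrightarrow> g \<in> smooth_generated U \<Longrightarrow> (\<lambda>x. f x + g x) \<in> smooth_generated U"
| mult: "f \<in> smooth_generated U \<Longrightarrow> g \<in> smooth_generated U \<Longrightarrow> (\<lambda>x. f x * g x) \<in> smooth_generated U"
| inverse: "f \<in> smooth_generated U \<Longrightarrow> \<forall>x\<in>U. f x \<noteq> 0 \<Longrightarrow> (\<lambda>x. inverse (f x)) \<in> smooth_generated U"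
| cong: "f \<in> smooth_generated U \<Longrightarrow> \<forall>x\<in>U. f x = g x \<Longrightarrow> g \<in> smooth_generated U"

lemma smooth_generated_partial:
  assumes "open U" "f \<in> smooth_generated U"
  shows "(\<forall>x\<in>U. f differentiable (at x)) \<and> (\<forall>i. partial i f \<in> smooth_generated U)"
  using assms(2)
proof induction
  case (smooth f)
  then show ?case using smooth_on_iff_partial smooth_generated.smooth by blast
next
  case (const c)
  show ?case using smooth_generated.const[of 0 U] by (simp add: partial_const)
next
  case (add f g)
  have "partial i (\<lambda>x. f x + g x) \<in> smooth_generated U" for i
    by (rule smooth_generated.cong[OF smooth_generated.add[of "partial i f" U "partial i g"]])
       (use add assms(1) in \<open>auto simp: partial_add\<close>)
  then show ?case using add by auto
next
  case (mult f g)
  have "partial i (\<lambda>x. f x * g x) \<in> smooth_generated U" for i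
    by (rule smooth_generated.cong[OF smooth_generated.add[OF
          smooth_generated.mult[of f U "partial i g"] smooth_generated.mult[of "partial i f" U g]]])
       (use mult assms(1) in \<open>auto simp: partial_mult\<close>)
  then show ?case using mult by auto
next
  case (inverse f)
  let ?f' = "\<lambda>x. inverse (f x)"
  have "?f' \<in> smooth_generated U"
    using inverse.hyps by (rule smooth_generated.inverse)
  moreover have "partial i f \<in> smooth_generated U" for i
    using inverse.IH by blast
  ultimately have "(\<lambda>x. -1 * (inverse (f x) * partial i f x * inverse (f x))) \<in> smooth_generated U" for i
    by (intro smooth_generated.mult smooth_generated.const)
  then have "partial i ?f' \<in> smooth_generated U" for i
    by (rule smooth_generated.cong) (use inverse in \<open>auto simp: partial_inverse\<close>)
  moreover have "?f' differentiable (at x)" if "x \<in> U" for x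
    using inverse that by (auto intro: differentiable_inverse)
  ultimately show ?case by blast
next
  case (cong f g)
  have "g differentiable (at x)" if "x \<in> U" for x
    using differentiable_cong_open[OF assms(1) that, of f g] cong that by auto
  moreover have "partial i g \<in> smooth_generated U" for i
    using partial_cong_open[OF assms(1), of _ f g i] cong by (blast intro: smooth_generated.cong)
  ultimately show ?case by blast
qed

lemma smooth_generated_imp_smooth_on:
  assumes "open U" "f \<in> smooth_generated U"
  shows "smooth_on U f"
proof -
  have "dpart is f \<in> smooth_generated U" for "is"
    by (induction "is") (simp_all add: assms smooth_generated_partial)
  then show ?thesis
    unfolding smooth_on_def using smooth_generated_partial[OF assms(1)] by blast
qed

lemma smooth_on_const: "open U \<Longrightarrow> smooth_on U (\<lambda>x. c)"
  by (rule smooth_generated_imp_smooth_on) (auto intro: smooth_generated.const)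

lemma smooth_on_add:
  "open U \<Longrightarrow> smooth_on U f \<Longrightarrow> smooth_on U g \<Longrightarrow> smooth_on U (\<lambda>x. f x + g x)"
  by (rule smooth_generated_imp_smooth_on) (auto intro: smooth_generated.add smooth_generated.smooth)

lemma smooth_on_mult:
  "open U \<Longrightarrow> smooth_on U f \<Longrightarrow> smooth_on U g \<Longrightarrow> smooth_on U (\<lambda>x. f x * g x)"
  by (rule smooth_generated_imp_smooth_on) (auto intro: smooth_generated.mult smooth_generated.smooth)

lemma smooth_on_cong:
  "open U \<Longrightarrow> smooth_on U f \<Longrightarrow> (\<And>x. x \<in> U \<Longrightarrow> f x = g x) \<Longrightarrow> smooth_on U g"
  by (rule smooth_generated_imp_smooth_on) (auto intro: smooth_generated.cong[OF smooth_generated.smooth])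

lemma smooth_on_divide:
  assumes "open U" "smooth_on U f" "smooth_on U g" "\<And>x. x \<in> U \<Longrightarrow> g x \<noteq> 0"
  shows "smooth_on U (\<lambda>x. f x / g x)"
proof (rule smooth_generated_imp_smooth_on[OF assms(1)])
  show "(\<lambda>x. f x / g x) \<in> smooth_generated U"
    using assms(2-4) unfolding divide_inverse
    by (intro smooth_generated.mult smooth_generated.inverse smooth_generated.smooth) auto
qed

lemma smooth_on_diff:
  assumes "open U" "smooth_on U f" "smooth_on U g"
  shows "smooth_on U (\<lambda>x. f x - g x)"
proof -
  have "smooth_on U (\<lambda>x. f x + -1 * g x)"
    using assms by (intro smooth_on_add smooth_on_mult smooth_on_const)
  then show ?thesis by simp
qed

lemma smooth_on_sum:
  "open U \<Longrightarrow> (\<And>k. k \<in> A \<Longrightarrow> smooth_on U (F k)) \<Longrightarrow> smooth_on U (\<lambda>x. \<Sum>k\<in>A. F k x)"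
  by (induction A rule: infinite_finite_induct) (auto intro: smooth_on_const smooth_on_add)

lemma smooth_on_prod:
  "open U \<Longrightarrow> (\<And>k. k \<in> A \<Longrightarrow> smooth_on U (F k)) \<Longrightarrow> smooth_on U (\<lambda>x. \<Prod>k\<in>A. F k x)"
  by (induction A rule: infinite_finite_induct) (auto intro: smooth_on_const smooth_on_mult)

lemma smooth_on_det:
  fixes M :: "'n::finite \<Rightarrow> 'n \<Rightarrow> real^'d::finite \<Rightarrow> real"
  assumes "open U" "\<And>a b. smooth_on U (M a b)"
  shows "smooth_on U (\<lambda>x. det (\<chi> a b. M a b x))"
  unfolding det_def using assms
  by (intro smooth_on_sum smooth_on_mult smooth_on_const smooth_on_prod) auto

section \<open>Symmetry of second partial derivatives\<close>

lemma mvt_along_axis: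
  fixes F :: "real^'d::finite \<Rightarrow> real"
  assumes "0 < h" "\<And>t. 0 \<le> t \<Longrightarrow> t \<le> h \<Longrightarrow> F differentiable (at (y + t *\<^sub>R axis i 1))"
  shows "\<exists>t. 0 < t \<and> t < h \<and> F (y + h *\<^sub>R axis i 1) - F y = h * partial i F (y + t *\<^sub>R axis i 1)"
proof -
  have "((\<lambda>t. F (y + t *\<^sub>R axis i 1)) has_derivative (\<lambda>k. k * partial i F (y + t *\<^sub>R axis i 1)))
          (at t within {0..h})" if "0 \<le> t" "t \<le> h" for t
    by (rule has_derivative_at_withinI[OF has_derivative_partial_along_axis[OF assms(2)[OF that]]])
  from mvt_simple[OF assms(1) this] show ?thesis by auto
qed

lemma partial_translate:
  assumes "f differentiable (at (y + c))"
  shows "(\<lambda>z. f (z + c)) differentiable (at y)" "partial i (\<lambda>z. f (z + c)) y = partial i f (y + c)"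
proof -
  have "((\<lambda>z. z + c) has_derivative (\<lambda>h. h)) (at y)"
    by (auto intro!: derivative_eq_intros)
  from has_derivative_compose[OF this has_derivative_frechet_derivative[OF assms]]
  have D: "((\<lambda>z. f (z + c)) has_derivative frechet_derivative f (at (y + c))) (at y)" .
  then show "(\<lambda>z. f (z + c)) differentiable (at y)"
    unfolding differentiable_def by blast
  show "partial i (\<lambda>z. f (z + c)) y = partial i f (y + c)"
    unfolding partial_eq_has_derivative[OF D] by (simp add: partial_def)
qed

lemma second_difference_eq_mixed_partial:
  fixes f :: "real^'d::finite \<Rightarrow> real"
  assumes U: "ball x r \<subseteq> U" and f: "smooth_on U f" and h: "0 < h" "2 * h < r"
  shows "\<exists>\<xi>. dist \<xi> x < 2 * h \<and>
     f (x + h *\<^sub>R axis i 1 + h *\<^sub>R axis j 1) - f (x + h *\<^sub>R axis i 1) - f (x + h *\<^sub>R axis j 1) + f x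
       = h * h * partial j (partial i f) \<xi>"
proof -
  let ?ei = "axis i (1::real) :: real^'d" and ?ej = "axis j (1::real) :: real^'d"
  have near: "dist (x + s *\<^sub>R ?ei + u *\<^sub>R ?ej) x \<le> s + u" if "0 \<le> s" "0 \<le> u" for s u
    using norm_triangle_ineq[of "s *\<^sub>R ?ei" "u *\<^sub>R ?ej"] that by (simp add: dist_norm add.assoc)
  have diff: "f differentiable (at (x + s *\<^sub>R ?ei + u *\<^sub>R ?ej))"
    "partial i f differentiable (at (x + s *\<^sub>R ?ei + u *\<^sub>R ?ej))"
    if "0 \<le> s" "s \<le> h" "0 \<le> u" "u \<le> h" for s u
  proof -
    have "x + s *\<^sub>R ?ei + u *\<^sub>R ?ej \<in> U"
      using near[of s u] that h U by (auto simp: dist_commute)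
    then show "f differentiable (at (x + s *\<^sub>R ?ei + u *\<^sub>R ?ej))"
      "partial i f differentiable (at (x + s *\<^sub>R ?ei + u *\<^sub>R ?ej))"
      using f smooth_on_partial smooth_on_imp_differentiable by blast+
  qed
  define F where "F z = f (z + h *\<^sub>R ?ej) - f z" for z
  have "F differentiable (at (x + t *\<^sub>R ?ei))" "partial i F (x + t *\<^sub>R ?ei)
      = partial i f (x + t *\<^sub>R ?ei + h *\<^sub>R ?ej) - partial i f (x + t *\<^sub>R ?ei)"
    if "0 \<le> t" "t \<le> h" for t
    using diff(1)[of t h] diff(1)[of t 0] that h
    unfolding F_def by (auto simp: partial_diff partial_translate)
  then obtain s where s: "0 < s" "s < h"
    and "F (x + h *\<^sub>R ?ei) - F x = h * (partial i f (x + s *\<^sub>R ?ei + h *\<^sub>R ?ej) - partial i f (x + s *\<^sub>R ?ei))"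
    using mvt_along_axis[OF h(1), of F x i] by force
  moreover obtain u where u: "0 < u" "u < h" and
    "partial i f (x + s *\<^sub>R ?ei + h *\<^sub>R ?ej) - partial i f (x + s *\<^sub>R ?ei)
      = h * partial j (partial i f) (x + s *\<^sub>R ?ei + u *\<^sub>R ?ej)"
    using mvt_along_axis[OF h(1), of "partial i f" "x + s *\<^sub>R ?ei" j] diff(2)[of s] s by auto
  moreover have "dist (x + s *\<^sub>R ?ei + u *\<^sub>R ?ej) x < 2 * h"
    using near[of s u] s u by simp
  ultimately show ?thesis
    unfolding F_def by (intro exI[of _ "x + s *\<^sub>R ?ei + u *\<^sub>R ?ej"]) (simp add: algebra_simps)
qed

text \<open>Schwarz's theorem: both mixed partials are limits of the same second difference quotient.\<close>

lemma partial_commute: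
  fixes f :: "real^'d::finite \<Rightarrow> real"
  assumes "open U" "x \<in> U" "smooth_on U f"
  shows "partial i (partial j f) x = partial j (partial i f) x"
proof (rule ccontr)
  let ?F = "partial j (partial i f)" and ?G = "partial i (partial j f)"
  assume ne: "?G x \<noteq> ?F x"
  define e where "e = \<bar>?G x - ?F x\<bar> / 2"
  have e: "e > 0" using ne by (simp add: e_def)
  have "isCont ?F x" "isCont ?G x"
    using assms(2,3) by (auto intro!: differentiable_imp_continuous_within smooth_on_imp_differentiable
        smooth_on_partial)
  then obtain d1 d2 where d: "d1 > 0" "d2 > 0"
    "\<And>y. dist y x < d1 \<Longrightarrow> dist (?F y) (?F x) < e" "\<And>y. dist y x < d2 \<Longrightarrow> dist (?G y) (?G x) < e"
    using e unfolding continuous_at_eps_delta by metis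
  obtain r where r: "r > 0" "ball x r \<subseteq> U" using assms openE by blast
  define h where "h = min r (min d1 d2) / 4"
  have h: "0 < h" "2 * h < r" "2 * h < d1" "2 * h < d2" using r d by (auto simp: h_def)
  obtain \<xi> where \<xi>: "dist \<xi> x < 2 * h"
    "f (x + h *\<^sub>R axis i 1 + h *\<^sub>R axis j 1) - f (x + h *\<^sub>R axis i 1) - f (x + h *\<^sub>R axis j 1) + f x = h * h * ?F \<xi>"
    using second_difference_eq_mixed_partial[OF r(2) assms(3) h(1,2)] by blast
  obtain \<eta> where \<eta>: "dist \<eta> x < 2 * h"
    "f (x + h *\<^sub>R axis j 1 + h *\<^sub>R axis i 1) - f (x + h *\<^sub>R axis j 1) - f (x + h *\<^sub>R axis i 1) + f x = h * h * ?G \<eta>"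
    using second_difference_eq_mixed_partial[OF r(2) assms(3) h(1,2), of j i] by blast
  have "?F \<xi> = ?G \<eta>" using \<xi>(2) \<eta>(2) h(1) by (simp add: algebra_simps)
  moreover have "dist (?F \<xi>) (?F x) < e" "dist (?G \<eta>) (?G x) < e" using d \<xi>(1) \<eta>(1) h by auto
  ultimately have "\<bar>?G x - ?F x\<bar> < 2 * e" by (simp add: dist_real_def)
  then show False by (simp add: e_def)
qed

lemma sum_mult_delta: "(\<Sum>l\<in>UNIV. A l * (if l = j then 1 else 0)) = (A j :: real)"
  for A :: "'a::finite \<Rightarrow> real"
  by (simp add: if_distrib[of "(*) _"] sum.delta' cong: if_cong)

lemma sum_delta_mult: "(\<Sum>l\<in>UNIV. (if j = l then 1 else 0) * A l) = (A j :: real)"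
  for A :: "'a::finite \<Rightarrow> real"
  by (simp add: if_distrib[of "\<lambda>c. c * _"] sum.delta cong: if_cong)

lemma sum_reverse3:
  "(\<Sum>a\<in>A. \<Sum>b\<in>B. \<Sum>c\<in>C. F a b c) = (\<Sum>c\<in>C. \<Sum>b\<in>B. \<Sum>a\<in>A. F a b c)"
proof -
  have "(\<Sum>a\<in>A. \<Sum>b\<in>B. \<Sum>c\<in>C. F a b c) = (\<Sum>b\<in>B. \<Sum>a\<in>A. \<Sum>c\<in>C. F a b c)"
    by (rule sum.swap)
  also have "\<dots> = (\<Sum>b\<in>B. \<Sum>c\<in>C. \<Sum>a\<in>A. F a b c)"
    by (rule sum.cong[OF refl], rule sum.swap)
  also have "\<dots> = (\<Sum>c\<in>C. \<Sum>b\<in>B. \<Sum>a\<in>A. F a b c)"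
    by (rule sum.swap)
  finally show ?thesis .
qed

lemma sum_swap_inner:
  "(\<Sum>a\<in>A. \<Sum>b\<in>B. \<Sum>c\<in>C. F a b c) = (\<Sum>a\<in>A. \<Sum>c\<in>C. \<Sum>b\<in>B. F a b c)"
  by (rule sum.cong[OF refl], rule sum.swap)

section \<open>Positive definite matrices\<close>

definition pos_def :: "real^'n::finite^'n \<Rightarrow> bool" where
  "pos_def A \<longleftrightarrow> (\<forall>v. v \<noteq> 0 \<longrightarrow> (\<Sum>i\<in>UNIV. \<Sum>j\<in>UNIV. v$i * A$i$j * v$j) > 0)"

lemma pos_def_mult_eq_0_imp:
  assumes "pos_def A" "A *v v = 0"
  shows "v = 0"
proof (rule ccontr)
  assume "v \<noteq> 0"
  then have "0 < (\<Sum>i\<in>UNIV. \<Sum>j\<in>UNIV. v$i * A$i$j * v$j)"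
    using assms(1) unfolding pos_def_def by blast
  also have "\<dots> = (\<Sum>i\<in>UNIV. v$i * (A *v v)$i)"
    by (simp add: matrix_vector_mult_def sum_distrib_left mult.assoc)
  finally show False using assms(2) by simp
qed

lemma matrix_inv_inverse:
  assumes "invertible A"
  shows "A ** matrix_inv A = mat 1" "matrix_inv A ** A = mat 1"
  using someI_ex[OF assms[unfolded invertible_def]] unfolding matrix_inv_def by auto

lemma pos_def_invertible:
  assumes "pos_def A"
  shows "invertible A"
proof -
  obtain B where "B ** A = mat 1"
    using pos_def_mult_eq_0_imp[OF assms] matrix_left_invertible_ker by blast
  then show ?thesis
    using matrix_left_right_inverse unfolding invertible_def by blast
qed

lemma pos_def_matrix_inv_symmetric:
  assumes "pos_def A" "transpose A = A"
  shows "transpose (matrix_inv A) = matrix_inv A"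
proof -
  note inv = matrix_inv_inverse[OF pos_def_invertible[OF assms(1)]]
  have "transpose (matrix_inv A) ** A = mat 1"
    using inv(1) assms(2) by (metis matrix_transpose_mul transpose_mat)
  then show ?thesis
    using inv(1) by (metis matrix_mul_assoc matrix_mul_lid matrix_mul_rid)
qed

lemma matrix_inv_cramer:
  fixes A :: "real^'n::finite^'n"
  assumes "invertible A"
  shows "matrix_inv A $ k $ j = det (\<chi> a c. if c = k then axis j 1 $ a else A$a$c) / det A"
proof -
  have "A *v (matrix_inv A *v axis j 1) = axis j 1"
    using assms by (simp add: matrix_vector_mul_assoc matrix_inv_inverse)
  then have "matrix_inv A *v axis j 1 = (\<chi> k. det (\<chi> a c. if c = k then axis j 1 $ a else A$a$c) / det A)"
    using cramer[OF invertible_det_nz[THEN iffD1, OF assms]] by blast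
  moreover have "(matrix_inv A *v axis j 1) $ k = matrix_inv A $ k $ j"
    by (simp add: matrix_vector_mult_def axis_def if_distrib cong: if_cong)
  ultimately show ?thesis by simp
qed

section \<open>Metric, inverse metric and Christoffel symbols\<close>

locale riemannian =
  fixes U :: "(real^'d::finite) set" and g :: "'d \<Rightarrow> 'd \<Rightarrow> real^'d \<Rightarrow> real"
  assumes riemannian_metric: "riemannian_metric U g"
begin

abbreviation \<Gamma> where "\<Gamma> \<equiv> christoffel g"

lemma open_U: "open U"
  and metric_sym: "g i j x = g j i x"
  and metric_smooth: "smooth_on U (g i j)"
  using riemannian_metric unfolding riemannian_metric_def by blast+

definition metric_matrix :: "real^'d \<Rightarrow> real^'d^'d" where
  "metric_matrix x = (\<chi> a b. g a b x)"

lemma metric_fun_sym: "g i j = g j i"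
  using metric_sym by (rule ext)

lemma metric_matrix_symmetric: "transpose (metric_matrix x) = metric_matrix x"
  by (simp add: metric_matrix_def transpose_def metric_sym vec_eq_iff)

lemma metric_matrix_pos_def: "x \<in> U \<Longrightarrow> pos_def (metric_matrix x)"
  using riemannian_metric unfolding riemannian_metric_def metric_matrix_def pos_def_def by simp

lemma ginv_eq: "ginv g i j x = matrix_inv (metric_matrix x) $ i $ j"
  by (simp add: ginv_def metric_matrix_def)

lemma ginv_sym: "x \<in> U \<Longrightarrow> ginv g i j x = ginv g j i x"
proof -
  assume "x \<in> U"
  then have "transpose (matrix_inv (metric_matrix x)) = matrix_inv (metric_matrix x)"
    by (intro pos_def_matrix_inv_symmetric metric_matrix_pos_def metric_matrix_symmetric)
  from arg_cong[OF this, of "\<lambda>M. M $ j $ i"] show ?thesis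
    by (simp add: ginv_eq transpose_def)
qed

lemma ginv_metric_delta: "x \<in> U \<Longrightarrow> (\<Sum>l\<in>UNIV. ginv g i l x * g l j x) = (if i = j then 1 else 0)"
  using matrix_inv_inverse(2)[OF pos_def_invertible[OF metric_matrix_pos_def], of x]
  by (simp add: ginv_eq matrix_matrix_mult_def mat_def vec_eq_iff metric_matrix_def)

lemma metric_ginv_delta: "x \<in> U \<Longrightarrow> (\<Sum>l\<in>UNIV. g i l x * ginv g l j x) = (if i = j then 1 else 0)"
  using matrix_inv_inverse(1)[OF pos_def_invertible[OF metric_matrix_pos_def], of x]
  by (simp add: ginv_eq matrix_matrix_mult_def mat_def vec_eq_iff metric_matrix_def)

text \<open>Cramer's rule exhibits the inverse metric as a quotient of polynomials in the \<open>g i j\<close>.\<close>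

lemma ginv_smooth: "smooth_on U (ginv g i j)"
proof (rule smooth_on_cong[OF open_U smooth_on_divide[OF open_U smooth_on_det smooth_on_det]])
  show "smooth_on U (\<lambda>x. if c = i then axis j 1 $ a else g a c x)" for a c
    by (cases "c = i") (simp_all add: smooth_on_const open_U metric_smooth)
  show "\<And>x. x \<in> U \<Longrightarrow> det (\<chi> a b. g a b x) \<noteq> 0"
    using invertible_det_nz pos_def_invertible[OF metric_matrix_pos_def]
    unfolding metric_matrix_def by blast
  show "det (\<chi> a b. if b = i then axis j 1 $ a else g a b x) / det (\<chi> a b. g a b x) = ginv g i j x"
    if "x \<in> U" for x
    using matrix_inv_cramer[OF pos_def_invertible[OF metric_matrix_pos_def[OF that]], of i j]
    by (simp add: ginv_eq metric_matrix_def cong: if_cong)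
qed (use open_U metric_smooth in auto)

definition christoffel1 :: "'d \<Rightarrow> 'd \<Rightarrow> 'd \<Rightarrow> real^'d \<Rightarrow> real" where
  "christoffel1 l i j x = (1/2) * (partial i (g j l) x + partial j (g i l) x - partial l (g i j) x)"

lemma christoffel_eq_christoffel1: "\<Gamma> k i j x = (\<Sum>l\<in>UNIV. ginv g k l x * christoffel1 l i j x)"
  unfolding christoffel_def christoffel1_def by (simp add: sum_distrib_left mult_ac)

lemma christoffel1_sym: "christoffel1 l i j x = christoffel1 l j i x"
  unfolding christoffel1_def by (simp add: metric_fun_sym[of i j] algebra_simps)

lemma christoffel_sym: "\<Gamma> k i j x = \<Gamma> k j i x"
  unfolding christoffel_eq_christoffel1 by (simp add: christoffel1_sym[of _ i j])

lemma partial_metric_eq_christoffel1: "partial a (g i j) x = christoffel1 j a i x + christoffel1 i a j x"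
  unfolding christoffel1_def by (simp add: metric_fun_sym[of j i] algebra_simps)

lemma christoffel1_smooth: "smooth_on U (christoffel1 l i j)"
  unfolding christoffel1_def[abs_def]
  by (intro smooth_on_mult smooth_on_const smooth_on_diff smooth_on_add smooth_on_partial
      metric_smooth open_U)

lemma christoffel_smooth: "smooth_on U (\<Gamma> k i j)"
  unfolding christoffel_eq_christoffel1[abs_def]
  by (intro smooth_on_sum smooth_on_mult ginv_smooth christoffel1_smooth open_U)

lemma metric_christoffel_eq_christoffel1:
  "x \<in> U \<Longrightarrow> (\<Sum>d\<in>UNIV. g q d x * \<Gamma> d c e x) = christoffel1 q c e x"
proof -
  assume x: "x \<in> U"
  have "(\<Sum>d\<in>UNIV. g q d x * \<Gamma> d c e x)
      = (\<Sum>d\<in>UNIV. \<Sum>l\<in>UNIV. g q d x * ginv g d l x * christoffel1 l c e x)"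
    by (simp add: christoffel_eq_christoffel1 sum_distrib_left mult_ac)
  also have "\<dots> = (\<Sum>l\<in>UNIV. (\<Sum>d\<in>UNIV. g q d x * ginv g d l x) * christoffel1 l c e x)"
    by (subst sum.swap) (simp add: sum_distrib_right)
  also have "\<dots> = christoffel1 q c e x"
    by (simp add: metric_ginv_delta[OF x] sum_delta_mult)
  finally show ?thesis .
qed

lemma metric_compatible: "x \<in> U \<Longrightarrow>
  partial a (g i j) x = (\<Sum>p\<in>UNIV. \<Gamma> p a i x * g p j x) + (\<Sum>p\<in>UNIV. \<Gamma> p a j x * g i p x)"
  using metric_christoffel_eq_christoffel1[of x j a i] metric_christoffel_eq_christoffel1[of x i a j]
  by (simp add: partial_metric_eq_christoffel1 metric_sym[of _ j] mult_ac)

lemma partial_ginv_eq: "x \<in> U \<Longrightarrow>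
  partial a (ginv g i j) x = - (\<Sum>l\<in>UNIV. \<Sum>k\<in>UNIV. ginv g i l x * partial a (g l k) x * ginv g k j x)"
proof -
  assume x: "x \<in> U"
  have diff: "ginv g i l differentiable (at x)" "g l k differentiable (at x)" for i l k
    using x by (auto intro: smooth_on_imp_differentiable ginv_smooth metric_smooth)
  have "(\<Sum>l\<in>UNIV. ginv g i l x * partial a (g l k) x + partial a (ginv g i l) x * g l k x)
      = partial a (\<lambda>y. \<Sum>l\<in>UNIV. ginv g i l y * g l k y) x" for k
    by (simp add: partial_sum partial_mult diff)
  also have "partial a (\<lambda>y. \<Sum>l\<in>UNIV. ginv g i l y * g l k y) x = partial a (\<lambda>y. if i = k then 1 else 0) x" for k
    by (rule partial_cong_open[OF open_U x]) (simp add: ginv_metric_delta)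
  finally have *: "(\<Sum>l\<in>UNIV. partial a (ginv g i l) x * g l k x)
      = - (\<Sum>l\<in>UNIV. ginv g i l x * partial a (g l k) x)" for k
    by (simp add: partial_const sum.distrib eq_neg_iff_add_eq_0 add.commute)
  have "partial a (ginv g i j) x = (\<Sum>l\<in>UNIV. partial a (ginv g i l) x * (\<Sum>k\<in>UNIV. g l k x * ginv g k j x))"
    by (simp add: metric_ginv_delta[OF x] sum_mult_delta)
  also have "\<dots> = (\<Sum>k\<in>UNIV. (\<Sum>l\<in>UNIV. partial a (ginv g i l) x * g l k x) * ginv g k j x)"
    by (simp add: sum_distrib_left sum_distrib_right mult_ac) (rule sum.swap)
  also have "\<dots> = - (\<Sum>l\<in>UNIV. \<Sum>k\<in>UNIV. ginv g i l x * partial a (g l k) x * ginv g k j x)"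
    by (simp add: * sum_distrib_right sum_negf) (rule sum.swap)
  finally show ?thesis .
qed

lemma partial_ginv: "x \<in> U \<Longrightarrow>
  partial a (ginv g i j) x = - (\<Sum>p\<in>UNIV. \<Gamma> i a p x * ginv g p j x) - (\<Sum>p\<in>UNIV. \<Gamma> j a p x * ginv g i p x)"
proof -
  assume x: "x \<in> U"
  have "(\<Sum>l\<in>UNIV. \<Sum>k\<in>UNIV. ginv g i l x * (\<Sum>p\<in>UNIV. \<Gamma> p a l x * g p k x) * ginv g k j x)
      = (\<Sum>l\<in>UNIV. ginv g i l x * (\<Sum>p\<in>UNIV. \<Gamma> p a l x * (\<Sum>k\<in>UNIV. g p k x * ginv g k j x)))"
    by (simp add: sum_distrib_left sum_distrib_right mult_ac) (rule sum.cong[OF refl], rule sum.swap)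
  also have "\<dots> = (\<Sum>p\<in>UNIV. \<Gamma> j a p x * ginv g i p x)"
    by (simp add: metric_ginv_delta[OF x] sum_mult_delta christoffel_sym[of j a] mult.commute)
  finally have 1: "(\<Sum>l\<in>UNIV. \<Sum>k\<in>UNIV. ginv g i l x * (\<Sum>p\<in>UNIV. \<Gamma> p a l x * g p k x) * ginv g k j x)
      = (\<Sum>p\<in>UNIV. \<Gamma> j a p x * ginv g i p x)" .
  have "(\<Sum>l\<in>UNIV. \<Sum>k\<in>UNIV. ginv g i l x * (\<Sum>p\<in>UNIV. \<Gamma> p a k x * g l p x) * ginv g k j x)
      = (\<Sum>k\<in>UNIV. (\<Sum>p\<in>UNIV. (\<Sum>l\<in>UNIV. ginv g i l x * g l p x) * \<Gamma> p a k x) * ginv g k j x)"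
    by (subst sum.swap) (simp add: sum_distrib_left sum_distrib_right mult_ac,
        rule sum.cong[OF refl], rule sum.swap)
  also have "\<dots> = (\<Sum>p\<in>UNIV. \<Gamma> i a p x * ginv g p j x)"
    by (simp add: ginv_metric_delta[OF x] sum_delta_mult)
  finally have 2: "(\<Sum>l\<in>UNIV. \<Sum>k\<in>UNIV. ginv g i l x * (\<Sum>p\<in>UNIV. \<Gamma> p a k x * g l p x) * ginv g k j x)
      = (\<Sum>p\<in>UNIV. \<Gamma> i a p x * ginv g p j x)" .
  show ?thesis
    using 1 2 unfolding partial_ginv_eq[OF x] metric_compatible[OF x]
    by (simp add: ring_distribs sum.distrib)
qed

end

section \<open>The curvature tensor\<close>

context riemannian
begin

text \<open>\<open>riemann d e b c\<close> is \<open>R\<^sup>d\<^sub>e\<^sub>b\<^sub>c\<close>, with \<open>ricci g j k = R\<^sup>i\<^sub>k\<^sub>i\<^sub>j\<close> (summed over \<open>i\<close>).\<close>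

definition riemann :: "'d \<Rightarrow> 'd \<Rightarrow> 'd \<Rightarrow> 'd \<Rightarrow> real^'d \<Rightarrow> real" where
  "riemann d e b c x = partial b (\<Gamma> d c e) x - partial c (\<Gamma> d b e) x
     + (\<Sum>p\<in>UNIV. \<Gamma> d b p x * \<Gamma> p c e x - \<Gamma> d c p x * \<Gamma> p b e x)"

definition riemann_lower :: "'d \<Rightarrow> 'd \<Rightarrow> 'd \<Rightarrow> 'd \<Rightarrow> real^'d \<Rightarrow> real" where
  "riemann_lower q e b c x = (\<Sum>d\<in>UNIV. g q d x * riemann d e b c x)"

lemma ricci_eq_riemann: "ricci g j k x = (\<Sum>i\<in>UNIV. riemann i k i j x)"
  unfolding ricci_def riemann_def by simp

lemma riemann_antisym: "riemann d e b c x = - riemann d e c b x"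
  unfolding riemann_def by (simp add: sum_subtractf algebra_simps)

lemma riemann_smooth: "smooth_on U (riemann d e b c)"
  unfolding riemann_def[abs_def]
  by (intro smooth_on_add smooth_on_diff smooth_on_sum smooth_on_mult smooth_on_partial
      christoffel_smooth open_U)

lemma ricci_smooth: "smooth_on U (ricci g j k)"
  unfolding ricci_eq_riemann[abs_def] by (intro smooth_on_sum riemann_smooth open_U)

lemma riemannian_differentiable:
  assumes "x \<in> U"
  shows "g i j differentiable (at x)" "ginv g i j differentiable (at x)"
    "christoffel1 l i j differentiable (at x)" "\<Gamma> k i j differentiable (at x)"
    "partial a (\<Gamma> k i j) differentiable (at x)" "riemann d e b c differentiable (at x)"
    "ricci g i j differentiable (at x)"
  using assms by (auto intro!: smooth_on_imp_differentiable smooth_on_partial metric_smooth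
      ginv_smooth christoffel1_smooth christoffel_smooth riemann_smooth ricci_smooth)

lemma ginv_riemann_lower: "x \<in> U \<Longrightarrow> (\<Sum>q\<in>UNIV. ginv g d q x * riemann_lower q e b c x) = riemann d e b c x"
proof -
  assume x: "x \<in> U"
  have "(\<Sum>q\<in>UNIV. ginv g d q x * riemann_lower q e b c x)
      = (\<Sum>l\<in>UNIV. (\<Sum>q\<in>UNIV. ginv g d q x * g q l x) * riemann l e b c x)"
    unfolding riemann_lower_def by (simp add: sum_distrib_left sum_distrib_right mult_ac) (rule sum.swap)
  then show ?thesis by (simp add: ginv_metric_delta[OF x] sum_delta_mult)
qed

lemma partial_metric_christoffel: "x \<in> U \<Longrightarrow> (\<Sum>d\<in>UNIV. g q d x * partial b (\<Gamma> d c e) x)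
   = partial b (christoffel1 q c e) x - (\<Sum>d\<in>UNIV. (christoffel1 d b q x + christoffel1 q b d x) * \<Gamma> d c e x)"
proof -
  assume x: "x \<in> U"
  have "partial b (christoffel1 q c e) x = partial b (\<lambda>y. \<Sum>d\<in>UNIV. g q d y * \<Gamma> d c e y) x"
    by (rule partial_cong_open[OF open_U x]) (simp add: metric_christoffel_eq_christoffel1)
  also have "\<dots> = (\<Sum>d\<in>UNIV. g q d x * partial b (\<Gamma> d c e) x + partial b (g q d) x * \<Gamma> d c e x)"
    by (simp add: partial_sum partial_mult riemannian_differentiable[OF x])
  finally show ?thesis by (simp add: sum.distrib partial_metric_eq_christoffel1)
qed

lemma metric_christoffel_christoffel: "x \<in> U \<Longrightarrow>
  (\<Sum>d\<in>UNIV. g q d x * (\<Sum>p\<in>UNIV. \<Gamma> d b p x * \<Gamma> p c e x)) = (\<Sum>p\<in>UNIV. christoffel1 q b p x * \<Gamma> p c e x)"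
proof -
  assume x: "x \<in> U"
  have "(\<Sum>d\<in>UNIV. g q d x * (\<Sum>p\<in>UNIV. \<Gamma> d b p x * \<Gamma> p c e x))
      = (\<Sum>p\<in>UNIV. (\<Sum>d\<in>UNIV. g q d x * \<Gamma> d b p x) * \<Gamma> p c e x)"
    by (simp add: sum_distrib_left sum_distrib_right mult.assoc) (rule sum.swap)
  then show ?thesis by (simp add: metric_christoffel_eq_christoffel1[OF x])
qed

lemma riemann_lower_eq: "x \<in> U \<Longrightarrow> riemann_lower q e b c x
   = partial b (christoffel1 q c e) x - partial c (christoffel1 q b e) x
     - (\<Sum>d\<in>UNIV. christoffel1 d b q x * \<Gamma> d c e x) + (\<Sum>d\<in>UNIV. christoffel1 d c q x * \<Gamma> d b e x)"
proof -
  assume x: "x \<in> U"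
  have "riemann_lower q e b c x
     = (\<Sum>d\<in>UNIV. g q d x * partial b (\<Gamma> d c e) x) - (\<Sum>d\<in>UNIV. g q d x * partial c (\<Gamma> d b e) x)
       + (\<Sum>d\<in>UNIV. g q d x * (\<Sum>p\<in>UNIV. \<Gamma> d b p x * \<Gamma> p c e x))
       - (\<Sum>d\<in>UNIV. g q d x * (\<Sum>p\<in>UNIV. \<Gamma> d c p x * \<Gamma> p b e x))"
    unfolding riemann_lower_def riemann_def by (simp add: ring_distribs sum.distrib sum_subtractf)
  then show ?thesis
    by (simp add: partial_metric_christoffel[OF x] metric_christoffel_christoffel[OF x]
        ring_distribs sum.distrib)
qed

lemma christoffel1_christoffel_swap: "x \<in> U \<Longrightarrow>
  (\<Sum>d\<in>UNIV. christoffel1 d b q x * \<Gamma> d c e x) = (\<Sum>d\<in>UNIV. christoffel1 d c e x * \<Gamma> d b q x)"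
proof -
  assume x: "x \<in> U"
  have "(\<Sum>d\<in>UNIV. christoffel1 d b q x * \<Gamma> d c e x)
      = (\<Sum>d\<in>UNIV. \<Sum>l\<in>UNIV. christoffel1 d b q x * ginv g d l x * christoffel1 l c e x)"
    by (simp add: christoffel_eq_christoffel1 sum_distrib_left mult_ac)
  also have "\<dots> = (\<Sum>l\<in>UNIV. \<Sum>d\<in>UNIV. christoffel1 d b q x * ginv g d l x * christoffel1 l c e x)"
    by (rule sum.swap)
  also have "\<dots> = (\<Sum>l\<in>UNIV. christoffel1 l c e x * \<Gamma> l b q x)"
    by (simp add: christoffel_eq_christoffel1 sum_distrib_left mult_ac ginv_sym[OF x])
  finally show ?thesis .
qed

lemma riemann_lower_antisym: "x \<in> U \<Longrightarrow> riemann_lower q e b c x = - riemann_lower e q b c x"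
proof -
  assume x: "x \<in> U"
  have pair: "partial u (christoffel1 q v e) x + partial u (christoffel1 e v q) x = partial u (partial v (g e q)) x"
    for u v
  proof -
    have "partial u (\<lambda>y. christoffel1 q v e y + christoffel1 e v q y) x = partial u (partial v (g e q)) x"
      by (rule partial_cong_open[OF open_U x]) (simp add: partial_metric_eq_christoffel1)
    then show ?thesis by (simp add: partial_add riemannian_differentiable[OF x])
  qed
  moreover have "partial b (partial c (g e q)) x = partial c (partial b (g e q)) x"
    by (rule partial_commute[OF open_U x metric_smooth])
  ultimately show ?thesis
    unfolding riemann_lower_eq[OF x]
    using pair[of b c] pair[of c b] christoffel1_christoffel_swap[OF x, of b q c e]
      christoffel1_christoffel_swap[OF x, of c q b e]
    by linarith
qed

lemma ginv_riemann_contraction: "x \<in> U \<Longrightarrow>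
  (\<Sum>e\<in>UNIV. \<Sum>a\<in>UNIV. ginv g e a x * riemann d e c a x) = (\<Sum>q\<in>UNIV. ginv g d q x * ricci g c q x)"
proof -
  assume x: "x \<in> U"
  have "riemann d e c a x = - (\<Sum>q\<in>UNIV. ginv g d q x * riemann_lower e q c a x)" for e a
  proof -
    have "riemann d e c a x = (\<Sum>q\<in>UNIV. ginv g d q x * riemann_lower q e c a x)"
      by (rule ginv_riemann_lower[OF x, symmetric])
    also have "\<dots> = (\<Sum>q\<in>UNIV. ginv g d q x * - riemann_lower e q c a x)"
      by (rule sum.cong[OF refl]) (simp add: riemann_lower_antisym[OF x, of _ e c a])
    finally show ?thesis by (simp add: sum_negf)
  qed
  then have "(\<Sum>e\<in>UNIV. \<Sum>a\<in>UNIV. ginv g e a x * riemann d e c a x)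
      = - (\<Sum>e\<in>UNIV. \<Sum>a\<in>UNIV. \<Sum>q\<in>UNIV. ginv g d q x * (ginv g a e x * riemann_lower e q c a x))"
    by (simp add: ginv_sym[OF x, of _ a for a] sum_distrib_left sum_negf mult_ac)
  also have "\<dots> = - (\<Sum>q\<in>UNIV. ginv g d q x * (\<Sum>a\<in>UNIV. \<Sum>e\<in>UNIV. ginv g a e x * riemann_lower e q c a x))"
    by (subst sum_reverse3) (simp add: sum_distrib_left)
  also have "\<dots> = (\<Sum>q\<in>UNIV. ginv g d q x * ricci g c q x)"
    by (simp add: ginv_riemann_lower[OF x] ricci_eq_riemann riemann_antisym[of _ _ c] sum_negf)
  finally show ?thesis .
qed

end

section \<open>The second Bianchi identity\<close>

context riemannian
begin

definition riemann_covd :: "'d \<Rightarrow> 'd \<Rightarrow> 'd \<Rightarrow> 'd \<Rightarrow> 'd \<Rightarrow> real^'d \<Rightarrow> real" where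
  "riemann_covd a d e b c x = partial a (riemann d e b c) x
     + (\<Sum>p\<in>UNIV. \<Gamma> d a p x * riemann p e b c x - \<Gamma> p a e x * riemann d p b c x
                 - \<Gamma> p a b x * riemann d e p c x - \<Gamma> p a c x * riemann d e b p x)"

lemma riemann_covd_antisym: "x \<in> U \<Longrightarrow> riemann_covd a d e b c x = - riemann_covd a d e c b x"
proof -
  assume x: "x \<in> U"
  have "riemann d e b c = (\<lambda>y. - 1 * riemann d e c b y)"
    by (simp add: fun_eq_iff riemann_antisym[of d e b c])
  then have "partial a (riemann d e b c) x = - 1 * partial a (riemann d e c b) x"
    using partial_cmult[OF riemannian_differentiable(6)[OF x]] by metis
  then show ?thesis
    unfolding riemann_covd_def
    using riemann_antisym[of d e p c x for p] riemann_antisym[of d e b p x for p]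
      riemann_antisym[of d p c b x for p] riemann_antisym[of p e c b x for p]
    by (simp add: sum_negf[symmetric] algebra_simps)
qed

text \<open>In coordinates, \<open>\<nabla>\<^sub>aR\<^sup>d\<^sub>e\<^sub>b\<^sub>c\<close> consists of second derivatives of \<open>\<Gamma>\<close>, terms quadratic in \<open>\<Gamma>, \<partial>\<Gamma>, R\<close>
  and terms cubic in \<open>\<Gamma>\<close>. The second derivatives cancel in the cyclic sum over \<open>a, b, c\<close> by Schwarz's
  theorem, and so do the other two groups, separately.\<close>

definition bianchi_cubic :: "'d \<Rightarrow> 'd \<Rightarrow> 'd \<Rightarrow> 'd \<Rightarrow> 'd \<Rightarrow> real^'d \<Rightarrow> real" where
  "bianchi_cubic d e u v w x = (\<Sum>p\<in>UNIV. \<Sum>q\<in>UNIV. \<Gamma> d u p x * \<Gamma> p v q x * \<Gamma> q w e x)"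

definition bianchi_quadratic :: "'d \<Rightarrow> 'd \<Rightarrow> 'd \<Rightarrow> 'd \<Rightarrow> 'd \<Rightarrow> 'd \<Rightarrow> real^'d \<Rightarrow> real" where
  "bianchi_quadratic d e a b c p x =
       \<Gamma> d b p x * partial a (\<Gamma> p c e) x + partial a (\<Gamma> d b p) x * \<Gamma> p c e x
       - (\<Gamma> d c p x * partial a (\<Gamma> p b e) x + partial a (\<Gamma> d c p) x * \<Gamma> p b e x)
       + \<Gamma> d a p x * (partial b (\<Gamma> p c e) x - partial c (\<Gamma> p b e) x)
       - \<Gamma> p a e x * (partial b (\<Gamma> d c p) x - partial c (\<Gamma> d b p) x)
       - \<Gamma> p a b x * riemann d e p c x - \<Gamma> p a c x * riemann d e b p x"

lemma partial_riemann: "x \<in> U \<Longrightarrow> partial a (riemann d e b c) x =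
   partial a (partial b (\<Gamma> d c e)) x - partial a (partial c (\<Gamma> d b e)) x
   + (\<Sum>p\<in>UNIV. \<Gamma> d b p x * partial a (\<Gamma> p c e) x + partial a (\<Gamma> d b p) x * \<Gamma> p c e x
       - (\<Gamma> d c p x * partial a (\<Gamma> p b e) x + partial a (\<Gamma> d c p) x * \<Gamma> p b e x))"
  unfolding riemann_def[abs_def]
  by (simp add: partial_add partial_diff partial_sum partial_mult riemannian_differentiable)

lemma christoffel_riemann_eq: "(\<Sum>p\<in>UNIV. \<Gamma> d a p x * riemann p e b c x) =
   (\<Sum>p\<in>UNIV. \<Gamma> d a p x * (partial b (\<Gamma> p c e) x - partial c (\<Gamma> p b e) x))
   + bianchi_cubic d e a b c x - bianchi_cubic d e a c b x"
  unfolding riemann_def bianchi_cubic_def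
  by (simp add: ring_distribs sum.distrib sum_subtractf sum_distrib_left mult.assoc)

lemma riemann_christoffel_eq: "(\<Sum>p\<in>UNIV. \<Gamma> p a e x * riemann d p b c x) =
   (\<Sum>p\<in>UNIV. \<Gamma> p a e x * (partial b (\<Gamma> d c p) x - partial c (\<Gamma> d b p) x))
   + bianchi_cubic d e b c a x - bianchi_cubic d e c b a x"
proof -
  have "(\<Sum>p\<in>UNIV. \<Gamma> p a e x * riemann d p b c x) =
     (\<Sum>p\<in>UNIV. \<Gamma> p a e x * (partial b (\<Gamma> d c p) x - partial c (\<Gamma> d b p) x))
     + (\<Sum>p\<in>UNIV. \<Sum>q\<in>UNIV. \<Gamma> q a e x * (\<Gamma> d b p x * \<Gamma> p c q x))
     - (\<Sum>p\<in>UNIV. \<Sum>q\<in>UNIV. \<Gamma> q a e x * (\<Gamma> d c p x * \<Gamma> p b q x))"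
    unfolding riemann_def
    by (simp add: ring_distribs sum.distrib sum_subtractf sum_distrib_left
        sum.swap[where g = "\<lambda>q p. \<Gamma> q a e x * (\<Gamma> d b p x * \<Gamma> p c q x)"]
        sum.swap[where g = "\<lambda>q p. \<Gamma> q a e x * (\<Gamma> d c p x * \<Gamma> p b q x)"])
  then show ?thesis by (simp add: bianchi_cubic_def mult_ac)
qed

lemma riemann_covd_eq: "x \<in> U \<Longrightarrow> riemann_covd a d e b c x =
   partial a (partial b (\<Gamma> d c e)) x - partial a (partial c (\<Gamma> d b e)) x
   + (\<Sum>p\<in>UNIV. bianchi_quadratic d e a b c p x)
   + bianchi_cubic d e a b c x - bianchi_cubic d e a c b x - bianchi_cubic d e b c a x + bianchi_cubic d e c b a x"
proof -
  assume x: "x \<in> U"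
  have "riemann_covd a d e b c x = partial a (riemann d e b c) x
     + (\<Sum>p\<in>UNIV. \<Gamma> d a p x * riemann p e b c x) - (\<Sum>p\<in>UNIV. \<Gamma> p a e x * riemann d p b c x)
     - (\<Sum>p\<in>UNIV. \<Gamma> p a b x * riemann d e p c x) - (\<Sum>p\<in>UNIV. \<Gamma> p a c x * riemann d e b p x)"
    unfolding riemann_covd_def by (simp add: sum_subtractf)
  moreover have "(\<Sum>p\<in>UNIV. bianchi_quadratic d e a b c p x) =
      (\<Sum>p\<in>UNIV. \<Gamma> d b p x * partial a (\<Gamma> p c e) x + partial a (\<Gamma> d b p) x * \<Gamma> p c e x
       - (\<Gamma> d c p x * partial a (\<Gamma> p b e) x + partial a (\<Gamma> d c p) x * \<Gamma> p b e x))
     + (\<Sum>p\<in>UNIV. \<Gamma> d a p x * (partial b (\<Gamma> p c e) x - partial c (\<Gamma> p b e) x))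
     - (\<Sum>p\<in>UNIV. \<Gamma> p a e x * (partial b (\<Gamma> d c p) x - partial c (\<Gamma> d b p) x))
     - (\<Sum>p\<in>UNIV. \<Gamma> p a b x * riemann d e p c x) - (\<Sum>p\<in>UNIV. \<Gamma> p a c x * riemann d e b p x)"
    unfolding bianchi_quadratic_def by (simp only: sum.distrib sum_subtractf)
  ultimately show ?thesis
    using partial_riemann[OF x, of a d e b c] christoffel_riemann_eq[of d a x e b c]
      riemann_christoffel_eq[of a e x d b c]
    by linarith
qed

lemma bianchi_quadratic_cyclic:
  "bianchi_quadratic d e a b c p x + bianchi_quadratic d e b c a p x + bianchi_quadratic d e c a b p x = 0"
proof -
  have "\<Gamma> p a c x = \<Gamma> p c a x" "\<Gamma> p b a x = \<Gamma> p a b x" "\<Gamma> p c b x = \<Gamma> p b c x"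
     "riemann d e b p x = - riemann d e p b x" "riemann d e c p x = - riemann d e p c x"
     "riemann d e a p x = - riemann d e p a x"
    by (simp_all add: christoffel_sym[of p] riemann_antisym[of d e _ p])
  then show ?thesis unfolding bianchi_quadratic_def by (simp add: algebra_simps)
qed

theorem second_bianchi:
  "x \<in> U \<Longrightarrow> riemann_covd a d e b c x + riemann_covd b d e c a x + riemann_covd c d e a b x = 0"
proof -
  assume x: "x \<in> U"
  have "partial u (partial v (\<Gamma> k i j)) x = partial v (partial u (\<Gamma> k i j)) x" for u v k i j
    by (rule partial_commute[OF open_U x christoffel_smooth])
  moreover have "(\<Sum>p\<in>UNIV. bianchi_quadratic d e a b c p x) + (\<Sum>p\<in>UNIV. bianchi_quadratic d e b c a p x)
      + (\<Sum>p\<in>UNIV. bianchi_quadratic d e c a b p x) = 0"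
    by (simp add: sum.distrib[symmetric] bianchi_quadratic_cyclic)
  ultimately show ?thesis
    using riemann_covd_eq[OF x, of a d e b c] riemann_covd_eq[OF x, of b d e c a]
      riemann_covd_eq[OF x, of c d e a b]
    by (smt (verit))
qed

end

section \<open>Covariant derivatives of 2-tensors and the contracted Bianchi identity\<close>

context riemannian
begin

text \<open>\<open>covd T a i j\<close> is \<open>(\<nabla>\<^sub>aT)\<^sub>i\<^sub>j\<close>, and \<open>divergence T j\<close> is \<open>\<nabla>\<^sup>aT\<^sub>j\<^sub>a\<close>: the derivative is contracted
  with the second slot, which is the one that appears in the contracted Bianchi identity.\<close>

definition covd :: "('d \<Rightarrow> 'd \<Rightarrow> real^'d \<Rightarrow> real) \<Rightarrow> 'd \<Rightarrow> 'd \<Rightarrow> 'd \<Rightarrow> real^'d \<Rightarrow> real" where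
  "covd T a i j x = partial a (T i j) x - (\<Sum>p\<in>UNIV. \<Gamma> p a i x * T p j x) - (\<Sum>p\<in>UNIV. \<Gamma> p a j x * T i p x)"

definition metric_trace :: "('d \<Rightarrow> 'd \<Rightarrow> real^'d \<Rightarrow> real) \<Rightarrow> real^'d \<Rightarrow> real" where
  "metric_trace T x = (\<Sum>a\<in>UNIV. \<Sum>e\<in>UNIV. ginv g a e x * T a e x)"

definition divergence :: "('d \<Rightarrow> 'd \<Rightarrow> real^'d \<Rightarrow> real) \<Rightarrow> 'd \<Rightarrow> real^'d \<Rightarrow> real" where
  "divergence T j x = (\<Sum>a\<in>UNIV. \<Sum>i\<in>UNIV. ginv g a i x * covd T a j i x)"

lemma scalar_curv_eq_metric_trace: "scalar_curv g = metric_trace (ricci g)"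
  by (simp add: fun_eq_iff scalar_curv_def metric_trace_def)

lemma covd_linear:
  assumes "\<And>i j. A i j differentiable (at x)" "\<And>i j. B i j differentiable (at x)"
    "\<And>i j. C i j differentiable (at x)" "\<And>i j. E i j differentiable (at x)"
  shows "covd (\<lambda>i j y. A i j y + B i j y - c * C i j y - E i j y) a i j x
     = covd A a i j x + covd B a i j x - c * covd C a i j x - covd E a i j x"
proof -
  have "partial a (\<lambda>y. A i j y + B i j y - c * C i j y - E i j y) x
     = partial a (A i j) x + partial a (B i j) x - c * partial a (C i j) x - partial a (E i j) x"
    by (simp add: partial_add partial_diff partial_cmult assms)
  then show ?thesis unfolding covd_def
    by (simp add: ring_distribs sum.distrib sum_subtractf sum_distrib_left algebra_simps)
qed

lemma covd_mult_metric:
  assumes "x \<in> U" "f differentiable (at x)"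
  shows "covd (\<lambda>i j y. f y * g i j y) a i j x = partial a f x * g i j x"
  unfolding covd_def
  by (simp add: partial_mult assms riemannian_differentiable metric_compatible ring_distribs
      sum_distrib_left mult_ac)

lemma partial_metric_trace:
  assumes x: "x \<in> U" and T: "\<And>i j. T i j differentiable (at x)"
  shows "partial c (metric_trace T) x = (\<Sum>a\<in>UNIV. \<Sum>e\<in>UNIV. ginv g a e x * covd T c a e x)"
proof -
  have "partial c (metric_trace T) x
      = (\<Sum>a\<in>UNIV. \<Sum>e\<in>UNIV. ginv g a e x * partial c (T a e) x + partial c (ginv g a e) x * T a e x)"
    unfolding metric_trace_def[abs_def]
    by (simp add: partial_sum partial_mult riemannian_differentiable[OF x] T)
  also have "\<dots> = (\<Sum>a\<in>UNIV. \<Sum>e\<in>UNIV. ginv g a e x * partial c (T a e) x)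
      - (\<Sum>a\<in>UNIV. \<Sum>e\<in>UNIV. \<Sum>p\<in>UNIV. \<Gamma> a c p x * ginv g p e x * T a e x)
      - (\<Sum>a\<in>UNIV. \<Sum>e\<in>UNIV. \<Sum>p\<in>UNIV. \<Gamma> e c p x * ginv g a p x * T a e x)"
    by (simp add: partial_ginv[OF x] sum.distrib sum_subtractf ring_distribs sum_distrib_right sum_negf)
  also have "(\<Sum>a\<in>UNIV. \<Sum>e\<in>UNIV. \<Sum>p\<in>UNIV. \<Gamma> a c p x * ginv g p e x * T a e x)
      = (\<Sum>a\<in>UNIV. \<Sum>e\<in>UNIV. \<Sum>p\<in>UNIV. ginv g a e x * (\<Gamma> p c a x * T p e x))"
    by (subst sum_reverse3) (simp add: mult_ac christoffel_sym[of _ c])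
  also have "(\<Sum>a\<in>UNIV. \<Sum>e\<in>UNIV. \<Sum>p\<in>UNIV. \<Gamma> e c p x * ginv g a p x * T a e x)
      = (\<Sum>a\<in>UNIV. \<Sum>e\<in>UNIV. \<Sum>p\<in>UNIV. ginv g a e x * (\<Gamma> p c e x * T a p x))"
    by (subst sum_swap_inner) (simp add: mult_ac christoffel_sym[of _ c])
  finally show ?thesis
    unfolding covd_def by (simp add: ring_distribs sum.distrib sum_subtractf sum_distrib_left)
qed

lemma riemann_covd_contract: "x \<in> U \<Longrightarrow> (\<Sum>d\<in>UNIV. riemann_covd a d e d c x) = covd (ricci g) a c e x"
proof -
  assume x: "x \<in> U"
  have "(\<Sum>d\<in>UNIV. partial a (riemann d e d c) x) = partial a (ricci g c e) x"
    unfolding ricci_eq_riemann[abs_def] by (simp add: partial_sum riemannian_differentiable[OF x])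
  moreover have "(\<Sum>d\<in>UNIV. riemann_covd a d e d c x) = (\<Sum>d\<in>UNIV. partial a (riemann d e d c) x)
     + (\<Sum>d\<in>UNIV. \<Sum>p\<in>UNIV. \<Gamma> d a p x * riemann p e d c x) - (\<Sum>d\<in>UNIV. \<Sum>p\<in>UNIV. \<Gamma> p a e x * riemann d p d c x)
     - (\<Sum>d\<in>UNIV. \<Sum>p\<in>UNIV. \<Gamma> p a d x * riemann d e p c x) - (\<Sum>d\<in>UNIV. \<Sum>p\<in>UNIV. \<Gamma> p a c x * riemann d e d p x)"
    unfolding riemann_covd_def by (simp add: sum.distrib sum_subtractf)
  moreover have "(\<Sum>d\<in>UNIV. \<Sum>p\<in>UNIV. \<Gamma> p a d x * riemann d e p c x)
      = (\<Sum>d\<in>UNIV. \<Sum>p\<in>UNIV. \<Gamma> d a p x * riemann p e d c x)"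
    by (rule sum.swap)
  moreover have "(\<Sum>d\<in>UNIV. \<Sum>p\<in>UNIV. \<Gamma> p a e x * riemann d p d c x) = (\<Sum>p\<in>UNIV. \<Gamma> p a e x * ricci g c p x)"
    by (subst sum.swap) (simp add: ricci_eq_riemann sum_distrib_left)
  moreover have "(\<Sum>d\<in>UNIV. \<Sum>p\<in>UNIV. \<Gamma> p a c x * riemann d e d p x) = (\<Sum>p\<in>UNIV. \<Gamma> p a c x * ricci g p e x)"
    by (subst sum.swap) (simp add: ricci_eq_riemann sum_distrib_left)
  ultimately show ?thesis unfolding covd_def by linarith
qed

lemma riemann_covd_contract_last: "x \<in> U \<Longrightarrow> (\<Sum>d\<in>UNIV. riemann_covd c d e a d x) = - covd (ricci g) c a e x"
  by (simp add: riemann_covd_antisym[of x c _ e a] riemann_covd_contract sum_negf)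

lemma partial_ginv_riemann_contraction: "x \<in> U \<Longrightarrow>
    (\<Sum>e\<in>UNIV. \<Sum>a\<in>UNIV. ginv g e a x * partial d (riemann d e c a) x)
  + (\<Sum>e\<in>UNIV. \<Sum>a\<in>UNIV. partial d (ginv g e a) x * riemann d e c a x)
  = (\<Sum>q\<in>UNIV. ginv g d q x * partial d (ricci g c q) x) + (\<Sum>q\<in>UNIV. partial d (ginv g d q) x * ricci g c q x)"
proof -
  assume x: "x \<in> U"
  have "partial d (\<lambda>y. \<Sum>e\<in>UNIV. \<Sum>a\<in>UNIV. ginv g e a y * riemann d e c a y) x
      = partial d (\<lambda>y. \<Sum>q\<in>UNIV. ginv g d q y * ricci g c q y) x"
    by (rule partial_cong_open[OF open_U x]) (simp add: ginv_riemann_contraction)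
  then show ?thesis
    by (simp add: partial_sum partial_mult riemannian_differentiable[OF x] sum.distrib)
qed

lemma partial_ginv_riemann: "x \<in> U \<Longrightarrow>
  (\<Sum>e\<in>UNIV. \<Sum>a\<in>UNIV. partial d (ginv g e a) x * riemann d e c a x)
  = - (\<Sum>e\<in>UNIV. \<Sum>a\<in>UNIV. \<Sum>p\<in>UNIV. ginv g e a x * (\<Gamma> p d e x * riemann d p c a x))
    - (\<Sum>e\<in>UNIV. \<Sum>a\<in>UNIV. \<Sum>p\<in>UNIV. ginv g e a x * (\<Gamma> p d a x * riemann d e c p x))"
proof -
  assume x: "x \<in> U"
  have "(\<Sum>e\<in>UNIV. \<Sum>a\<in>UNIV. partial d (ginv g e a) x * riemann d e c a x)
     = - (\<Sum>e\<in>UNIV. \<Sum>a\<in>UNIV. \<Sum>p\<in>UNIV. \<Gamma> e d p x * ginv g p a x * riemann d e c a x)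
       - (\<Sum>e\<in>UNIV. \<Sum>a\<in>UNIV. \<Sum>p\<in>UNIV. \<Gamma> a d p x * ginv g e p x * riemann d e c a x)"
    by (simp add: partial_ginv[OF x] ring_distribs sum.distrib sum_subtractf sum_distrib_right sum_negf)
  also have "(\<Sum>e\<in>UNIV. \<Sum>a\<in>UNIV. \<Sum>p\<in>UNIV. \<Gamma> e d p x * ginv g p a x * riemann d e c a x)
      = (\<Sum>e\<in>UNIV. \<Sum>a\<in>UNIV. \<Sum>p\<in>UNIV. ginv g e a x * (\<Gamma> p d e x * riemann d p c a x))"
    by (subst sum_reverse3) (simp add: mult_ac christoffel_sym[of _ d])
  also have "(\<Sum>e\<in>UNIV. \<Sum>a\<in>UNIV. \<Sum>p\<in>UNIV. \<Gamma> a d p x * ginv g e p x * riemann d e c a x)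
      = (\<Sum>e\<in>UNIV. \<Sum>a\<in>UNIV. \<Sum>p\<in>UNIV. ginv g e a x * (\<Gamma> p d a x * riemann d e c p x))"
    by (subst sum_swap_inner) (simp add: mult_ac christoffel_sym[of _ d])
  finally show ?thesis .
qed

lemma partial_ginv_ricci: "x \<in> U \<Longrightarrow> (\<Sum>q\<in>UNIV. partial d (ginv g d q) x * ricci g c q x)
   = - (\<Sum>p\<in>UNIV. \<Gamma> d d p x * (\<Sum>q\<in>UNIV. ginv g p q x * ricci g c q x))
     - (\<Sum>q\<in>UNIV. ginv g d q x * (\<Sum>p\<in>UNIV. \<Gamma> p d q x * ricci g c p x))"
proof -
  assume x: "x \<in> U"
  have "(\<Sum>q\<in>UNIV. partial d (ginv g d q) x * ricci g c q x)
    = - (\<Sum>q\<in>UNIV. \<Sum>p\<in>UNIV. \<Gamma> d d p x * ginv g p q x * ricci g c q x)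
      - (\<Sum>q\<in>UNIV. \<Sum>p\<in>UNIV. \<Gamma> q d p x * ginv g d p x * ricci g c q x)"
    by (simp add: partial_ginv[OF x] ring_distribs sum.distrib sum_subtractf sum_distrib_right sum_negf)
  also have "(\<Sum>q\<in>UNIV. \<Sum>p\<in>UNIV. \<Gamma> d d p x * ginv g p q x * ricci g c q x)
      = (\<Sum>p\<in>UNIV. \<Gamma> d d p x * (\<Sum>q\<in>UNIV. ginv g p q x * ricci g c q x))"
    by (subst sum.swap) (simp add: sum_distrib_left mult_ac)
  also have "(\<Sum>q\<in>UNIV. \<Sum>p\<in>UNIV. \<Gamma> q d p x * ginv g d p x * ricci g c q x)
      = (\<Sum>q\<in>UNIV. ginv g d q x * (\<Sum>p\<in>UNIV. \<Gamma> p d q x * ricci g c p x))"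
    by (subst sum.swap) (simp add: sum_distrib_left mult_ac)
  finally show ?thesis .
qed

text \<open>Contracting with \<open>g\<^sup>e\<^sup>a\<close> commutes with \<open>\<nabla>\<^sub>d\<close>, since \<open>\<nabla>g\<^sup>-\<^sup>1 = 0\<close>.\<close>

lemma ginv_riemann_covd_contraction: "x \<in> U \<Longrightarrow>
  (\<Sum>e\<in>UNIV. \<Sum>a\<in>UNIV. ginv g e a x * riemann_covd d d e c a x) = (\<Sum>q\<in>UNIV. ginv g d q x * covd (ricci g) d c q x)"
proof -
  assume x: "x \<in> U"
  define A1 where "A1 = (\<Sum>e\<in>UNIV. \<Sum>a\<in>UNIV. \<Sum>p\<in>UNIV. ginv g e a x * (\<Gamma> d d p x * riemann p e c a x))"
  define A2 where "A2 = (\<Sum>e\<in>UNIV. \<Sum>a\<in>UNIV. \<Sum>p\<in>UNIV. ginv g e a x * (\<Gamma> p d e x * riemann d p c a x))"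
  define A3 where "A3 = (\<Sum>e\<in>UNIV. \<Sum>a\<in>UNIV. \<Sum>p\<in>UNIV. ginv g e a x * (\<Gamma> p d c x * riemann d e p a x))"
  define A4 where "A4 = (\<Sum>e\<in>UNIV. \<Sum>a\<in>UNIV. \<Sum>p\<in>UNIV. ginv g e a x * (\<Gamma> p d a x * riemann d e c p x))"
  have "(\<Sum>e\<in>UNIV. \<Sum>a\<in>UNIV. ginv g e a x * riemann_covd d d e c a x)
      = (\<Sum>e\<in>UNIV. \<Sum>a\<in>UNIV. ginv g e a x * partial d (riemann d e c a) x) + A1 - A2 - A3 - A4"
    unfolding riemann_covd_def A1_def A2_def A3_def A4_def
    by (simp add: ring_distribs sum.distrib sum_subtractf sum_distrib_left)
  moreover have "A1 = (\<Sum>p\<in>UNIV. \<Gamma> d d p x * (\<Sum>e\<in>UNIV. \<Sum>a\<in>UNIV. ginv g e a x * riemann p e c a x))"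
    unfolding A1_def by (subst sum_reverse3, subst sum_swap_inner) (simp add: sum_distrib_left mult_ac)
  moreover have "A3 = (\<Sum>p\<in>UNIV. \<Gamma> p d c x * (\<Sum>e\<in>UNIV. \<Sum>a\<in>UNIV. ginv g e a x * riemann d e p a x))"
    unfolding A3_def by (subst sum_reverse3, subst sum_swap_inner) (simp add: sum_distrib_left mult_ac)
  moreover have "(\<Sum>p\<in>UNIV. \<Gamma> p d c x * (\<Sum>q\<in>UNIV. ginv g d q x * ricci g p q x))
      = (\<Sum>q\<in>UNIV. ginv g d q x * (\<Sum>p\<in>UNIV. \<Gamma> p d c x * ricci g p q x))"
    by (simp add: sum_distrib_left mult_ac) (rule sum.swap)
  moreover have "(\<Sum>q\<in>UNIV. ginv g d q x * covd (ricci g) d c q x)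
     = (\<Sum>q\<in>UNIV. ginv g d q x * partial d (ricci g c q) x)
       - (\<Sum>q\<in>UNIV. ginv g d q x * (\<Sum>p\<in>UNIV. \<Gamma> p d c x * ricci g p q x))
       - (\<Sum>q\<in>UNIV. ginv g d q x * (\<Sum>p\<in>UNIV. \<Gamma> p d q x * ricci g c p x))"
    unfolding covd_def by (simp add: ring_distribs sum.distrib sum_subtractf)
  ultimately show ?thesis
    using partial_ginv_riemann_contraction[OF x, of d c] partial_ginv_riemann[OF x, of d c]
      partial_ginv_ricci[OF x, of d c]
    unfolding A2_def[symmetric] A4_def[symmetric] ginv_riemann_contraction[OF x]
    by linarith
qed

theorem contracted_bianchi: "x \<in> U \<Longrightarrow> 2 * divergence (ricci g) c x = partial c (scalar_curv g) x"
proof -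
  assume x: "x \<in> U"
  have sym: "(\<Sum>e\<in>UNIV. \<Sum>a\<in>UNIV. ginv g e a x * F a e) = (\<Sum>a\<in>UNIV. \<Sum>e\<in>UNIV. ginv g a e x * F a e)"
    for F :: "'d \<Rightarrow> 'd \<Rightarrow> real"
    by (subst sum.swap) (simp add: ginv_sym[OF x])
  have "0 = (\<Sum>e\<in>UNIV. \<Sum>a\<in>UNIV. ginv g e a x *
      (\<Sum>d\<in>UNIV. riemann_covd a d e d c x + riemann_covd d d e c a x + riemann_covd c d e a d x))"
    by (simp add: second_bianchi[OF x])
  also have "\<dots> = (\<Sum>e\<in>UNIV. \<Sum>a\<in>UNIV. ginv g e a x * covd (ricci g) a c e x)
     + (\<Sum>e\<in>UNIV. \<Sum>a\<in>UNIV. \<Sum>d\<in>UNIV. ginv g e a x * riemann_covd d d e c a x)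
     - (\<Sum>e\<in>UNIV. \<Sum>a\<in>UNIV. ginv g e a x * covd (ricci g) c a e x)"
    by (simp add: sum.distrib riemann_covd_contract[OF x] riemann_covd_contract_last[OF x]
        ring_distribs sum_subtractf sum_distrib_left)
  also have "(\<Sum>e\<in>UNIV. \<Sum>a\<in>UNIV. \<Sum>d\<in>UNIV. ginv g e a x * riemann_covd d d e c a x)
      = (\<Sum>d\<in>UNIV. \<Sum>e\<in>UNIV. \<Sum>a\<in>UNIV. ginv g e a x * riemann_covd d d e c a x)"
    by (subst sum_reverse3) (rule sum_swap_inner)
  also have "\<dots> = (\<Sum>d\<in>UNIV. \<Sum>q\<in>UNIV. ginv g d q x * covd (ricci g) d c q x)"
    by (rule sum.cong[OF refl]) (rule ginv_riemann_covd_contraction[OF x])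
  finally have "2 * (\<Sum>a\<in>UNIV. \<Sum>e\<in>UNIV. ginv g a e x * covd (ricci g) a c e x)
      = (\<Sum>a\<in>UNIV. \<Sum>e\<in>UNIV. ginv g a e x * covd (ricci g) c a e x)"
    using sym[of "\<lambda>a e. covd (ricci g) a c e x"] sym[of "\<lambda>a e. covd (ricci g) c a e x"] by linarith
  then show ?thesis
    unfolding divergence_def scalar_curv_eq_metric_trace
    by (simp add: partial_metric_trace[OF x] riemannian_differentiable[OF x])
qed

end

section \<open>Closed quasi-Einstein metrics\<close>

locale closed_quasi_einstein = riemannian U g for U :: "(real^'d::finite) set" and g +
  fixes V :: "'d \<Rightarrow> real^'d \<Rightarrow> real" and m lam rho :: real
  assumes closed_qe: "closed_qe U g V m lam rho"
begin

abbreviation Vflat where "Vflat \<equiv> flat g V"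

lemma V_smooth: "smooth_on U (V k)"
  and m_pos: "m > 0"
  and quasi_einstein_eq: "x \<in> U \<Longrightarrow> (1/2) * lie_metric g V i j x + ricci g i j x
      - (1/m) * Vflat i x * Vflat j x = (lam + rho * scalar_curv g x) * g i j x"
  and Vflat_closed: "x \<in> U \<Longrightarrow> partial i (Vflat j) x = partial j (Vflat i) x"
  using closed_qe unfolding closed_qe_def quasi_einstein_def by blast+

lemma Vflat_smooth: "smooth_on U (Vflat i)"
  unfolding flat_def[abs_def] by (intro smooth_on_sum smooth_on_mult metric_smooth V_smooth open_U)

lemma ginv_Vflat: "x \<in> U \<Longrightarrow> (\<Sum>l\<in>UNIV. ginv g k l x * Vflat l x) = V k x"
proof -
  assume x: "x \<in> U"
  have "(\<Sum>l\<in>UNIV. ginv g k l x * Vflat l x) = (\<Sum>q\<in>UNIV. (\<Sum>l\<in>UNIV. ginv g k l x * g l q x) * V q x)"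
    unfolding flat_def by (simp add: sum_distrib_left sum_distrib_right mult_ac) (rule sum.swap)
  then show ?thesis by (simp add: ginv_metric_delta[OF x] sum_delta_mult)
qed

definition nabla_Vflat :: "'d \<Rightarrow> 'd \<Rightarrow> real^'d \<Rightarrow> real" where
  "nabla_Vflat i j x = partial i (Vflat j) x - (\<Sum>p\<in>UNIV. \<Gamma> p i j x * Vflat p x)"

lemma nabla_Vflat_smooth: "smooth_on U (nabla_Vflat i j)"
  unfolding nabla_Vflat_def[abs_def]
  by (intro smooth_on_diff smooth_on_sum smooth_on_mult smooth_on_partial Vflat_smooth
      christoffel_smooth open_U)

lemma nabla_Vflat_sym: "x \<in> U \<Longrightarrow> nabla_Vflat i j x = nabla_Vflat j i x"
  unfolding nabla_Vflat_def by (simp add: Vflat_closed christoffel_sym[of _ i j])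

lemma lie_metric_eq_nabla_Vflat: "x \<in> U \<Longrightarrow> (1/2) * lie_metric g V i j x = nabla_Vflat i j x"
proof -
  assume x: "x \<in> U"
  have partial_Vflat: "partial i (Vflat j) x
      = (\<Sum>k\<in>UNIV. g j k x * partial i (V k) x + partial i (g j k) x * V k x)" for i j
    unfolding flat_def[abs_def]
    by (simp add: partial_sum partial_mult riemannian_differentiable[OF x]
        smooth_on_imp_differentiable[OF V_smooth x])
  have "(\<Sum>k\<in>UNIV. V k x * christoffel1 k i j x)
      = (\<Sum>k\<in>UNIV. \<Sum>l\<in>UNIV. ginv g k l x * Vflat l x * christoffel1 k i j x)"
    by (simp add: ginv_Vflat[OF x, symmetric] sum_distrib_right)
  also have "\<dots> = (\<Sum>l\<in>UNIV. (\<Sum>k\<in>UNIV. ginv g l k x * christoffel1 k i j x) * Vflat l x)"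
    by (subst sum.swap) (simp add: sum_distrib_left sum_distrib_right ginv_sym[OF x, of _ l for l] mult_ac)
  also have "\<dots> = (\<Sum>p\<in>UNIV. \<Gamma> p i j x * Vflat p x)"
    by (simp add: christoffel_eq_christoffel1)
  finally have "(\<Sum>k\<in>UNIV. V k x * christoffel1 k i j x) = (\<Sum>p\<in>UNIV. \<Gamma> p i j x * Vflat p x)" .
  moreover have "lie_metric g V i j x
      = partial i (Vflat j) x + partial j (Vflat i) x - 2 * (\<Sum>k\<in>UNIV. V k x * christoffel1 k i j x)"
    unfolding lie_metric_def partial_Vflat christoffel1_def
    by (simp add: sum.distrib sum_subtractf sum_distrib_left algebra_simps metric_sym[of _ i] metric_sym[of _ j])
  ultimately show ?thesis
    using Vflat_closed[OF x, of i j] unfolding nabla_Vflat_def by simp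
qed

lemma partial_nabla_Vflat: "x \<in> U \<Longrightarrow> partial a (nabla_Vflat j i) x = partial a (partial j (Vflat i)) x
   - (\<Sum>q\<in>UNIV. \<Gamma> q j i x * partial a (Vflat q) x) - (\<Sum>q\<in>UNIV. partial a (\<Gamma> q j i) x * Vflat q x)"
  unfolding nabla_Vflat_def[abs_def]
  by (simp add: partial_diff partial_sum partial_mult riemannian_differentiable sum.distrib
      smooth_on_imp_differentiable[OF Vflat_smooth] smooth_on_imp_differentiable[OF smooth_on_partial[OF Vflat_smooth]])

lemma covd_nabla_Vflat_commute: "x \<in> U \<Longrightarrow>
  covd nabla_Vflat a j i x - covd nabla_Vflat j a i x = - (\<Sum>q\<in>UNIV. riemann q i a j x * Vflat q x)"
proof -
  assume x: "x \<in> U"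
  have "partial a (partial j (Vflat i)) x = partial j (partial a (Vflat i)) x"
    by (rule partial_commute[OF open_U x Vflat_smooth])
  moreover have "(\<Sum>p\<in>UNIV. \<Gamma> p a i x * nabla_Vflat j p x) = (\<Sum>p\<in>UNIV. \<Gamma> p a i x * partial j (Vflat p) x)
      - (\<Sum>p\<in>UNIV. \<Sum>q\<in>UNIV. \<Gamma> p a i x * \<Gamma> q j p x * Vflat q x)"
    "(\<Sum>p\<in>UNIV. \<Gamma> p j i x * nabla_Vflat a p x) = (\<Sum>p\<in>UNIV. \<Gamma> p j i x * partial a (Vflat p) x)
      - (\<Sum>p\<in>UNIV. \<Sum>q\<in>UNIV. \<Gamma> p j i x * \<Gamma> q a p x * Vflat q x)"
    unfolding nabla_Vflat_def by (simp_all add: ring_distribs sum_subtractf sum_distrib_left mult_ac)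
  moreover have "(\<Sum>p\<in>UNIV. \<Gamma> p a j x * nabla_Vflat p i x) = (\<Sum>p\<in>UNIV. \<Gamma> p j a x * nabla_Vflat p i x)"
    by (simp add: christoffel_sym[of _ a j])
  moreover have "(\<Sum>q\<in>UNIV. riemann q i a j x * Vflat q x) = (\<Sum>q\<in>UNIV. partial a (\<Gamma> q j i) x * Vflat q x)
      - (\<Sum>q\<in>UNIV. partial j (\<Gamma> q a i) x * Vflat q x)
      + (\<Sum>p\<in>UNIV. \<Sum>q\<in>UNIV. \<Gamma> p j i x * \<Gamma> q a p x * Vflat q x)
      - (\<Sum>p\<in>UNIV. \<Sum>q\<in>UNIV. \<Gamma> p a i x * \<Gamma> q j p x * Vflat q x)"
  proof -
    have "(\<Sum>q\<in>UNIV. \<Sum>p\<in>UNIV. \<Gamma> q a p x * \<Gamma> p j i x * Vflat q x)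
        = (\<Sum>p\<in>UNIV. \<Sum>q\<in>UNIV. \<Gamma> p j i x * \<Gamma> q a p x * Vflat q x)"
      "(\<Sum>q\<in>UNIV. \<Sum>p\<in>UNIV. \<Gamma> q j p x * \<Gamma> p a i x * Vflat q x)
        = (\<Sum>p\<in>UNIV. \<Sum>q\<in>UNIV. \<Gamma> p a i x * \<Gamma> q j p x * Vflat q x)"
      by (subst sum.swap, simp add: mult_ac)+
    then show ?thesis
      unfolding riemann_def by (simp add: ring_distribs sum.distrib sum_subtractf sum_distrib_right)
  qed
  ultimately show ?thesis
    unfolding covd_def
    using partial_nabla_Vflat[OF x, of a j i] partial_nabla_Vflat[OF x, of j a i] by linarith
qed

lemma ricci_identity: "x \<in> U \<Longrightarrow>
  divergence nabla_Vflat j x - partial j (metric_trace nabla_Vflat) x = (\<Sum>k\<in>UNIV. ricci g j k x * V k x)"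
proof -
  assume x: "x \<in> U"
  have "divergence nabla_Vflat j x - partial j (metric_trace nabla_Vflat) x
      = (\<Sum>a\<in>UNIV. \<Sum>i\<in>UNIV. ginv g a i x * (covd nabla_Vflat a j i x - covd nabla_Vflat j a i x))"
    unfolding divergence_def
    by (simp add: partial_metric_trace[OF x] smooth_on_imp_differentiable[OF nabla_Vflat_smooth x]
        ring_distribs sum_subtractf)
  also have "\<dots> = (\<Sum>a\<in>UNIV. \<Sum>i\<in>UNIV. \<Sum>q\<in>UNIV. Vflat q x * (ginv g i a x * riemann q i j a x))"
    by (simp add: covd_nabla_Vflat_commute[OF x] sum_distrib_left sum_negf[symmetric]
        riemann_antisym[of _ _ a j for a] ginv_sym[OF x, of a i for a i] mult_ac)
  also have "\<dots> = (\<Sum>q\<in>UNIV. Vflat q x * (\<Sum>i\<in>UNIV. \<Sum>a\<in>UNIV. ginv g i a x * riemann q i j a x))"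
    by (subst sum_reverse3) (simp add: sum_distrib_left)
  also have "\<dots> = (\<Sum>q\<in>UNIV. \<Sum>p\<in>UNIV. Vflat q x * (ginv g q p x * ricci g j p x))"
    by (simp add: ginv_riemann_contraction[OF x] sum_distrib_left)
  also have "\<dots> = (\<Sum>p\<in>UNIV. ricci g j p x * (\<Sum>q\<in>UNIV. ginv g p q x * Vflat q x))"
    by (subst sum.swap) (simp add: sum_distrib_left ginv_sym[OF x, of q p for q p] mult_ac)
  finally show ?thesis by (simp add: ginv_Vflat[OF x])
qed

end

section \<open>Contractions of the derivative of the quasi-Einstein equation\<close>

context closed_quasi_einstein
begin

definition qe_tensor :: "'d \<Rightarrow> 'd \<Rightarrow> real^'d \<Rightarrow> real" where
  "qe_tensor i j y = nabla_Vflat i j y + ricci g i j y - (1/m) * (Vflat i y * Vflat j y)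
     - (lam + rho * scalar_curv g y) * g i j y"

lemma qe_tensor_eq_0: "y \<in> U \<Longrightarrow> qe_tensor i j y = 0"
  using quasi_einstein_eq[of y i j] lie_metric_eq_nabla_Vflat[of y i j]
  unfolding qe_tensor_def by simp

text \<open>Symmetry of the Ricci tensor is read off the quasi-Einstein equation, which spares proving it
  for general metrics.\<close>

lemma ricci_sym: "x \<in> U \<Longrightarrow> ricci g i j x = ricci g j i x"
  using qe_tensor_eq_0[of x i j] qe_tensor_eq_0[of x j i]
  unfolding qe_tensor_def by (simp add: nabla_Vflat_sym metric_sym[of i j] mult.commute)

lemma scalar_curv_smooth: "smooth_on U (scalar_curv g)"
  unfolding scalar_curv_eq_metric_trace metric_trace_def[abs_def]
  by (intro smooth_on_sum smooth_on_mult ginv_smooth ricci_smooth open_U)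

lemma covd_Vflat_Vflat: "x \<in> U \<Longrightarrow>
  covd (\<lambda>i j y. Vflat i y * Vflat j y) a i j x = nabla_Vflat a i x * Vflat j x + Vflat i x * nabla_Vflat a j x"
  unfolding covd_def nabla_Vflat_def
  by (simp add: partial_mult smooth_on_imp_differentiable[OF Vflat_smooth] ring_distribs
      sum_distrib_left sum_distrib_right algebra_simps)

lemma covd_qe_tensor: "x \<in> U \<Longrightarrow> covd qe_tensor a i j x
   = covd nabla_Vflat a i j x + covd (ricci g) a i j x
     - (1/m) * (nabla_Vflat a i x * Vflat j x + Vflat i x * nabla_Vflat a j x)
     - rho * partial a (scalar_curv g) x * g i j x"
proof -
  assume x: "x \<in> U"
  have diff: "(\<lambda>y. lam + rho * scalar_curv g y) differentiable (at x)"
    using smooth_on_imp_differentiable[OF scalar_curv_smooth x] by simp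
  have "covd qe_tensor a i j x = covd nabla_Vflat a i j x + covd (ricci g) a i j x
      - (1/m) * covd (\<lambda>i j y. Vflat i y * Vflat j y) a i j x
      - covd (\<lambda>i j y. (lam + rho * scalar_curv g y) * g i j y) a i j x"
    unfolding qe_tensor_def[abs_def]
    by (rule covd_linear) (use x in \<open>auto intro!: smooth_on_imp_differentiable smooth_on_mult
        smooth_on_add smooth_on_const nabla_Vflat_smooth ricci_smooth Vflat_smooth metric_smooth
        scalar_curv_smooth open_U\<close>)
  moreover have "partial a (\<lambda>y. lam + rho * scalar_curv g y) x = rho * partial a (scalar_curv g) x"
    by (simp add: partial_add partial_cmult partial_const smooth_on_imp_differentiable[OF scalar_curv_smooth x])
  ultimately show ?thesis
    by (simp add: covd_Vflat_Vflat[OF x] covd_mult_metric[OF x diff])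
qed

lemma covd_qe_tensor_eq_0: "x \<in> U \<Longrightarrow> covd qe_tensor a i j x = 0"
proof -
  assume x: "x \<in> U"
  have "partial a (qe_tensor i j) x = partial a (\<lambda>y. 0) x"
    by (rule partial_cong_open[OF open_U x]) (simp add: qe_tensor_eq_0)
  then show ?thesis by (simp add: covd_def partial_const qe_tensor_eq_0[OF x])
qed

lemma sum_ginv_metric: "x \<in> U \<Longrightarrow> (\<Sum>a\<in>UNIV. \<Sum>i\<in>UNIV. ginv g a i x * g a i x) = real CARD('d)"
proof -
  assume x: "x \<in> U"
  have "(\<Sum>a\<in>UNIV. \<Sum>i\<in>UNIV. ginv g a i x * g a i x) = (\<Sum>a\<in>UNIV. \<Sum>i\<in>UNIV. ginv g a i x * g i a x)"
    by (simp add: metric_sym[of _ a for a])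
  also have "\<dots> = (\<Sum>a\<in>(UNIV::'d set). 1)" by (simp add: ginv_metric_delta[OF x])
  finally show ?thesis by simp
qed

lemma ginv_nabla_Vflat_Vflat: "x \<in> U \<Longrightarrow>
  (\<Sum>a\<in>UNIV. \<Sum>i\<in>UNIV. ginv g a i x * (nabla_Vflat j a x * Vflat i x + Vflat a x * nabla_Vflat j i x))
  = 2 * (\<Sum>a\<in>UNIV. V a x * nabla_Vflat a j x)"
proof -
  assume x: "x \<in> U"
  have "(\<Sum>a\<in>UNIV. \<Sum>i\<in>UNIV. ginv g a i x * (nabla_Vflat j a x * Vflat i x + Vflat a x * nabla_Vflat j i x))
     = (\<Sum>a\<in>UNIV. (\<Sum>i\<in>UNIV. ginv g a i x * Vflat i x) * nabla_Vflat j a x)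
       + (\<Sum>a\<in>UNIV. \<Sum>i\<in>UNIV. ginv g a i x * Vflat a x * nabla_Vflat j i x)"
    by (simp add: ring_distribs sum.distrib sum_distrib_right sum_distrib_left mult_ac)
  also have "(\<Sum>a\<in>UNIV. \<Sum>i\<in>UNIV. ginv g a i x * Vflat a x * nabla_Vflat j i x)
      = (\<Sum>i\<in>UNIV. (\<Sum>a\<in>UNIV. ginv g i a x * Vflat a x) * nabla_Vflat j i x)"
    by (subst sum.swap) (simp add: sum_distrib_right ginv_sym[OF x, of _ i for i])
  finally show ?thesis
    by (simp add: ginv_Vflat[OF x] nabla_Vflat_sym[OF x, of j])
qed

lemma divergence_qe_tensor: "x \<in> U \<Longrightarrow>
  divergence nabla_Vflat j x + divergence (ricci g) j x
  - (1/m) * (metric_trace nabla_Vflat x * Vflat j x + (\<Sum>a\<in>UNIV. V a x * nabla_Vflat a j x))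
  - rho * partial j (scalar_curv g) x = 0"
proof -
  assume x: "x \<in> U"
  have "0 = (\<Sum>a\<in>UNIV. \<Sum>i\<in>UNIV. ginv g a i x * covd qe_tensor a j i x)"
    by (simp add: covd_qe_tensor_eq_0[OF x])
  also have "\<dots> = divergence nabla_Vflat j x + divergence (ricci g) j x
      - (1/m) * (\<Sum>a\<in>UNIV. \<Sum>i\<in>UNIV. ginv g a i x * (nabla_Vflat a j x * Vflat i x + Vflat j x * nabla_Vflat a i x))
      - rho * (\<Sum>a\<in>UNIV. partial a (scalar_curv g) x * (\<Sum>i\<in>UNIV. ginv g a i x * g j i x))"
    unfolding divergence_def covd_qe_tensor[OF x]
    by (simp add: ring_distribs sum.distrib sum_subtractf sum_distrib_left mult_ac)
  also have "(\<Sum>a\<in>UNIV. \<Sum>i\<in>UNIV. ginv g a i x * (nabla_Vflat a j x * Vflat i x + Vflat j x * nabla_Vflat a i x))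
      = (\<Sum>a\<in>UNIV. V a x * nabla_Vflat a j x) + metric_trace nabla_Vflat x * Vflat j x"
    unfolding metric_trace_def
    by (simp add: ginv_Vflat[OF x, symmetric] ring_distribs sum.distrib sum_distrib_left
        sum_distrib_right mult_ac)
  finally show ?thesis
    by (simp add: metric_sym[of j] ginv_metric_delta[OF x] sum_mult_delta add.commute)
qed

lemma partial_trace_qe_tensor: "x \<in> U \<Longrightarrow>
  partial j (metric_trace nabla_Vflat) x + partial j (scalar_curv g) x
  - (1/m) * (2 * (\<Sum>a\<in>UNIV. V a x * nabla_Vflat a j x))
  - rho * partial j (scalar_curv g) x * real CARD('d) = 0"
proof -
  assume x: "x \<in> U"
  have "0 = (\<Sum>a\<in>UNIV. \<Sum>i\<in>UNIV. ginv g a i x * covd qe_tensor j a i x)"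
    by (simp add: covd_qe_tensor_eq_0[OF x])
  also have "\<dots> = (\<Sum>a\<in>UNIV. \<Sum>i\<in>UNIV. ginv g a i x * covd nabla_Vflat j a i x)
      + (\<Sum>a\<in>UNIV. \<Sum>i\<in>UNIV. ginv g a i x * covd (ricci g) j a i x)
      - (1/m) * (\<Sum>a\<in>UNIV. \<Sum>i\<in>UNIV. ginv g a i x * (nabla_Vflat j a x * Vflat i x + Vflat a x * nabla_Vflat j i x))
      - rho * partial j (scalar_curv g) x * (\<Sum>a\<in>UNIV. \<Sum>i\<in>UNIV. ginv g a i x * g a i x)"
    unfolding covd_qe_tensor[OF x]
    by (simp add: ring_distribs sum.distrib sum_subtractf sum_distrib_left mult_ac)
  finally show ?thesis
    unfolding scalar_curv_eq_metric_trace
    by (simp add: partial_metric_trace[OF x] riemannian_differentiable[OF x]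
        smooth_on_imp_differentiable[OF nabla_Vflat_smooth x] ginv_nabla_Vflat_Vflat[OF x]
        sum_ginv_metric[OF x])
qed

lemma V_contract_qe_tensor: "x \<in> U \<Longrightarrow>
  (\<Sum>a\<in>UNIV. V a x * nabla_Vflat a j x) + (\<Sum>k\<in>UNIV. ricci g j k x * V k x)
  - (1/m) * (\<Sum>a\<in>UNIV. V a x * Vflat a x) * Vflat j x - (lam + rho * scalar_curv g x) * Vflat j x = 0"
proof -
  assume x: "x \<in> U"
  have "0 = (\<Sum>a\<in>UNIV. V a x * qe_tensor a j x)" by (simp add: qe_tensor_eq_0[OF x])
  also have "\<dots> = (\<Sum>a\<in>UNIV. V a x * nabla_Vflat a j x) + (\<Sum>a\<in>UNIV. V a x * ricci g a j x)
      - (1/m) * (\<Sum>a\<in>UNIV. V a x * Vflat a x) * Vflat j x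
      - (lam + rho * scalar_curv g x) * (\<Sum>a\<in>UNIV. g j a x * V a x)"
    unfolding qe_tensor_def
    by (simp add: ring_distribs sum.distrib sum_subtractf sum_distrib_left sum_distrib_right
        metric_sym[of _ j] mult_ac)
  finally show ?thesis by (simp add: flat_def ricci_sym[OF x, of _ j] mult.commute)
qed

lemma trace_qe_tensor: "x \<in> U \<Longrightarrow>
  metric_trace nabla_Vflat x + scalar_curv g x - (1/m) * (\<Sum>a\<in>UNIV. V a x * Vflat a x)
  - (lam + rho * scalar_curv g x) * real CARD('d) = 0"
proof -
  assume x: "x \<in> U"
  have "0 = metric_trace qe_tensor x" by (simp add: metric_trace_def qe_tensor_eq_0[OF x])
  also have "\<dots> = metric_trace nabla_Vflat x + metric_trace (ricci g) x
      - (1/m) * (\<Sum>a\<in>UNIV. (\<Sum>i\<in>UNIV. ginv g a i x * Vflat i x) * Vflat a x)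
      - (lam + rho * scalar_curv g x) * (\<Sum>a\<in>UNIV. \<Sum>i\<in>UNIV. ginv g a i x * g a i x)"
    unfolding metric_trace_def qe_tensor_def
    by (simp add: ring_distribs sum.distrib sum_subtractf sum_distrib_left sum_distrib_right mult_ac)
  finally show ?thesis
    by (simp add: scalar_curv_eq_metric_trace ginv_Vflat[OF x] sum_ginv_metric[OF x])
qed

end

section \<open>The Ricci tensor in the direction of the potential field\<close>

text \<open>The final elimination; \<open>mi\<close> stands for \<open>1/m\<close>, so that the Groebner basis method applies.\<close>

lemma quasi_einstein_elimination:
  fixes RicV dr trD VD divD dtrD divR N W r rho lam m mi n :: real
  assumes "m * mi = 1"
    and "divD + divR - mi * (trD * W + VD) - rho * dr = 0"
    and "dtrD + dr - mi * (2 * VD) - rho * dr * (2 * n + 1) = 0"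
    and "divD - dtrD = RicV"
    and "2 * divR = dr"
    and "VD + RicV - mi * N * W - (lam + rho * r) * W = 0"
    and "trD + r - mi * N - (lam + rho * r) * (2 * n + 1) = 0"
  shows "((m - 1) * mi) * RicV = ((2 * n * lam + r * (2 * n * rho - 1)) * mi) * W - ((4 * n * rho - 1) / 2) * dr"
  using assms by algebra

context closed_quasi_einstein
begin

lemma ricci_potential_field:
  assumes x: "x \<in> U" and dim: "CARD('d) = 2 * n + 1"
  shows "((m - 1) / m) * (\<Sum>k\<in>UNIV. ricci g j k x * V k x)
    = ((2 * real n * lam + scalar_curv g x * (2 * real n * rho - 1)) / m) * Vflat j x
      - ((4 * real n * rho - 1) / 2) * partial j (scalar_curv g) x"
proof -
  have d: "real CARD('d) = 2 * real n + 1" using dim by simp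
  show ?thesis
    using quasi_einstein_elimination[of m "1/m", OF _ divergence_qe_tensor[OF x, of j]
        partial_trace_qe_tensor[OF x, of j, unfolded d] ricci_identity[OF x, of j]
        contracted_bianchi[OF x, of j] V_contract_qe_tensor[OF x, of j] trace_qe_tensor[OF x, unfolded d]]
      m_pos
    by simp
qed

end

theorem mainTheorem1:
  fixes U :: "(real^'d::finite) set"
    and g :: "'d \<Rightarrow> 'd \<Rightarrow> real^'d \<Rightarrow> real"
    and V X :: "'d \<Rightarrow> real^'d \<Rightarrow> real"
    and m lam rho :: real and n :: nat and x :: "real^'d"
  assumes "CARD('d) = 2 * n + 1"
    and "closed_qe U g V m lam rho"
    and "\<forall>k. smooth_on U (X k)"
    and "x \<in> U"
  shows "((m - 1) / m) * (\<Sum>j\<in>UNIV. \<Sum>k\<in>UNIV. ricci g j k x * V j x * X k x)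
       = ((2 * real n * lam + scalar_curv g x * (2 * real n * rho - 1)) / m)
            * (\<Sum>i\<in>UNIV. flat g V i x * X i x)
         - ((4 * real n * rho - 1) / 2) * (\<Sum>i\<in>UNIV. X i x * partial i (scalar_curv g) x)"
proof -
  interpret closed_quasi_einstein U g V m lam rho
    using assms(2) by unfold_locales (auto simp: closed_qe_def quasi_einstein_def)
  define c where "c = (2 * real n * lam + scalar_curv g x * (2 * real n * rho - 1)) / m"
  define d where "d = (4 * real n * rho - 1) / 2"
  have "((m - 1) / m) * (\<Sum>j\<in>UNIV. \<Sum>k\<in>UNIV. ricci g j k x * V j x * X k x)
      = (\<Sum>k\<in>UNIV. X k x * (((m - 1) / m) * (\<Sum>j\<in>UNIV. ricci g k j x * V j x)))"
    by (subst sum.swap) (simp add: sum_distrib_left ricci_sym[OF assms(4), of _ k for k] mult_ac)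
  also have "\<dots> = (\<Sum>k\<in>UNIV. X k x * (c * flat g V k x - d * partial k (scalar_curv g) x))"
    unfolding c_def d_def by (simp only: ricci_potential_field[OF assms(4,1)])
  also have "\<dots> = c * (\<Sum>i\<in>UNIV. flat g V i x * X i x) - d * (\<Sum>i\<in>UNIV. X i x * partial i (scalar_curv g) x)"
    by (simp add: right_diff_distrib sum_subtractf sum_distrib_left mult_ac)
  finally show ?thesis unfolding c_def d_def .
qed

end
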